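(* Let $c>0$, $d\ge1$, and for $x:\mathbb{R}\to\mathbb{R}^d$ with $|\dot x|<c$ write $v=\dot x$, $a=\ddot x$, $b=\dddot x$, $\gamma=(1-|v|^2/c^2)^{-1/2}$. Consider the system (zero relativistic jerk) $$B_i:=b_i+3\,\frac{v_ka_k}{c^2-v_kv_k}\,a_i=0,\qquad i=1,\dots,d$$ (summation over $k$), equivalently $\vec B=\vec b+3\gamma^2\frac{\vec v\cdot\vec a}{c^2}\vec a=0$. Its Lie algebra of Lie point symmetries is spanned by the $\frac{d(d-1)}{2}+3d+3$ vector fields $$\partial_t,\quad \partial_i,\quad x_i\partial_t+c^2t\partial_i,\quad x_j\partial_i-x_i\partial_j,\quad t\partial_t+x^i\partial_i,$$ $$(c^2t^2-x^jx_j)\partial_i+2x_i(t\partial_t+x^j\partial_j),\quad (c^2t^2+x^jx_j)\partial_t+2c^2tx^j\partial_j,$$ which form the conformal algebra of $(d+1)$-dimensional Minkowski space-time.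
   Context: Spatial indices are Euclidean, so $x_i=x^i$. Lie point symmetry: for a system of ODEs $F^a(t,x,\dot x,\dots,x^{(n)})=0$, the vector field $V=f(t,x)\partial_t+\xi^i(t,x)\partial_{x^i}$ ($f,\xi^i$ smooth) is a Lie point symmetry if the functional variation $\bar\delta x^i=\xi^i-\dot x^if$ satisfies the linearized equations $\sum_k\frac{\partial F^a}{\partial x^{j(k)}}\frac{\mathrm{d}^k}{\mathrm{d}t^k}\bar\delta x^j=0$ identically on all solutions (equivalently, the $n$-th prolongation of $V$ annihilates $F^a$ on the solution set). *)

theory Defs
  imports "HOL-Analysis.Analysis"
begin

fun iter_dd :: "'a::real_normed_vector list \<Rightarrow> ('a \<Rightarrow> 'b::real_normed_vector) \<Rightarrow> 'a \<Rightarrow> 'b" where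
  "iter_dd [] g = g"
| "iter_dd (e # es) g = iter_dd es (\<lambda>p. frechet_derivative g (at p) e)"

definition smooth_fun :: "('a::real_normed_vector \<Rightarrow> 'b::real_normed_vector) \<Rightarrow> bool" where
  "smooth_fun g \<longleftrightarrow> (\<forall>es p. iter_dd es g differentiable (at p))"

definition vd :: "(real \<Rightarrow> 'a::real_normed_vector) \<Rightarrow> real \<Rightarrow> 'a" where
  "vd y = (\<lambda>t. vector_derivative y (at t))"

definition smooth_curve_on :: "real set \<Rightarrow> (real \<Rightarrow> 'a::real_normed_vector) \<Rightarrow> bool" where
  "smooth_curve_on I y \<longleftrightarrow>
     (\<forall>k. \<forall>t\<in>I. (((vd ^^ k) y) has_vector_derivative ((vd ^^ Suc k) y t)) (at t))"

definition Bsys :: "real \<Rightarrow> real^'n \<Rightarrow> real^'n \<Rightarrow> real^'n \<Rightarrow> real^'n" where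
  "Bsys c v a b = b + (3 * (v \<bullet> a) / (c\<^sup>2 - v \<bullet> v)) *\<^sub>R a"

definition is_solution :: "real \<Rightarrow> real set \<Rightarrow> (real \<Rightarrow> real^'n) \<Rightarrow> bool" where
  "is_solution c I x \<longleftrightarrow> open I \<and> smooth_curve_on I x \<and>
     (\<forall>t\<in>I. norm (vd x t) < c \<and> Bsys c (vd x t) ((vd ^^ 2) x t) ((vd ^^ 3) x t) = 0)"

text \<open>Linearization of B at (v,a,b) applied to (eta1,eta2,eta3) = (eta', eta'', eta''');
  equals sum_k dB/dx^(k) eta^(k) (B does not depend on t, x).\<close>
definition linB :: "real \<Rightarrow> real^'n \<Rightarrow> real^'n \<Rightarrow> real^'n \<Rightarrow> real^'n \<Rightarrow> real^'n \<Rightarrow> real^'n \<Rightarrow> real^'n" where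
  "linB c v a b e1 e2 e3 =
     vector_derivative (\<lambda>s. Bsys c (v + s *\<^sub>R e1) (a + s *\<^sub>R e2) (b + s *\<^sub>R e3)) (at 0)"

text \<open>A vector field V(t,x) = (f(t,x), xi(t,x)) is a Lie point symmetry: V smooth and the
  functional variation delta x = xi - xdot f satisfies the linearized equations on every solution.\<close>
definition lie_point_symmetry :: "real \<Rightarrow> (real \<times> (real^'n) \<Rightarrow> real \<times> (real^'n)) \<Rightarrow> bool" where
  "lie_point_symmetry c V \<longleftrightarrow> smooth_fun V \<and>
     (\<forall>I x. is_solution c I x \<longrightarrow>
        (let \<delta> = (\<lambda>t. snd (V (t, x t)) - fst (V (t, x t)) *\<^sub>R vd x t) in
         \<forall>t\<in>I. linB c (vd x t) ((vd ^^ 2) x t) ((vd ^^ 3) x t)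
                      (vd \<delta> t) ((vd ^^ 2) \<delta> t) ((vd ^^ 3) \<delta> t) = 0))"

section \<open>The generators (components (f, xi) of f d_t + xi^i d_i)\<close>

definition G_t :: "real \<times> (real^'n) \<Rightarrow> real \<times> (real^'n)" where
  "G_t = (\<lambda>(t, x). (1, 0))"

definition G_x :: "'n \<Rightarrow> real \<times> (real^'n) \<Rightarrow> real \<times> (real^'n)" where
  "G_x i = (\<lambda>(t, x). (0, axis i 1))"

definition G_boost :: "real \<Rightarrow> 'n \<Rightarrow> real \<times> (real^'n) \<Rightarrow> real \<times> (real^'n)" where
  "G_boost c i = (\<lambda>(t, x). (x $ i, (c\<^sup>2 * t) *\<^sub>R axis i 1))"

definition G_rot :: "'n \<Rightarrow> 'n \<Rightarrow> real \<times> (real^'n) \<Rightarrow> real \<times> (real^'n)" where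
  "G_rot i j = (\<lambda>(t, x). (0, (x $ j) *\<^sub>R axis i 1 - (x $ i) *\<^sub>R axis j 1))"

definition G_dil :: "real \<times> (real^'n) \<Rightarrow> real \<times> (real^'n)" where
  "G_dil = (\<lambda>(t, x). (t, x))"

definition G_sc :: "real \<Rightarrow> 'n \<Rightarrow> real \<times> (real^'n) \<Rightarrow> real \<times> (real^'n)" where
  "G_sc c i = (\<lambda>(t, x). (2 * x $ i * t,
      (c\<^sup>2 * t\<^sup>2 - x \<bullet> x) *\<^sub>R axis i 1 + (2 * x $ i) *\<^sub>R x))"

definition G_sct :: "real \<Rightarrow> real \<times> (real^'n) \<Rightarrow> real \<times> (real^'n)" where
  "G_sct c = (\<lambda>(t, x). (c\<^sup>2 * t\<^sup>2 + x \<bullet> x, (2 * c\<^sup>2 * t) *\<^sub>R x))"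

text \<open>Real linear span of all the generators (rotations over all ordered pairs, which gives
  the same span as over i<j).\<close>
definition in_generator_span :: "real \<Rightarrow> (real \<times> (real^'n) \<Rightarrow> real \<times> (real^'n)) \<Rightarrow> bool" where
  "in_generator_span c V \<longleftrightarrow>
     (\<exists>a0 (a1::'n \<Rightarrow> real) (a2::'n \<Rightarrow> real) (a3::'n \<Rightarrow> 'n \<Rightarrow> real) a4 (a5::'n \<Rightarrow> real) a6.
        \<forall>p. V p = a0 *\<^sub>R G_t p + (\<Sum>i\<in>UNIV. a1 i *\<^sub>R G_x i p)
               + (\<Sum>i\<in>UNIV. a2 i *\<^sub>R G_boost c i p)
               + (\<Sum>i\<in>UNIV. \<Sum>j\<in>UNIV. a3 i j *\<^sub>R G_rot i j p)
               + a4 *\<^sub>R G_dil p + (\<Sum>i\<in>UNIV. a5 i *\<^sub>R G_sc c i p) + a6 *\<^sub>R G_sct c p)"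

end

(*
  Through every
  jet (p, v, a) with |v| < c passes a solution (a straight line or a hyperbolic motion), so the
  linearised equation becomes an identity in (p, v, a): the determining equations. Their part
  independent of a says that the third derivative of V along (1, v) is parallel to (1, v); their
  part quadratic in a is the conformal Killing equation <h, dV k> + <dV h, k> = sigma <h, k> of
  Minkowski space on timelike vectors, hence everywhere. Differentiating and polarising expresses
  d^2 V through d sigma, and the third-order condition forces the Hessian of sigma to vanish, so V is
  quadratic: V p = Y0 + A p + B_g(p, p) / 2 with A conformal and B_g the special conformal part.
  Conversely every such field satisfies the determining equations, and these fields are exactly the
  span of the listed generators.
*)

theory Submission
  imports Defs "HOL-Computational_Algebra.Polynomial"
begin

section \<open>Directional derivatives of smooth maps\<close>

definition dderiv :: "('a::real_normed_vector \<Rightarrow> 'b::real_normed_vector) \<Rightarrow> 'a \<Rightarrow> 'a \<Rightarrow> 'b" where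
  "dderiv V h = (\<lambda>p. frechet_derivative V (at p) h)"

lemma iter_dd_Cons_dderiv: "iter_dd (h # es) V = iter_dd es (dderiv V h)"
  by (simp add: dderiv_def)

lemma smooth_fun_dderiv: "smooth_fun V \<Longrightarrow> smooth_fun (dderiv V h)"
  unfolding smooth_fun_def by (metis iter_dd_Cons_dderiv)

lemma smooth_fun_differentiable: "smooth_fun V \<Longrightarrow> V differentiable (at p)"
  unfolding smooth_fun_def by (metis iter_dd.simps(1))

lemma smooth_fun_has_derivative:
  "smooth_fun V \<Longrightarrow> (V has_derivative (\<lambda>h. dderiv V h p)) (at p)"
  unfolding dderiv_def using smooth_fun_differentiable frechet_derivative_works by fastforce

lemma bounded_linear_dderiv: "smooth_fun V \<Longrightarrow> bounded_linear (\<lambda>h. dderiv V h p)"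
  using smooth_fun_has_derivative has_derivative_bounded_linear by blast

lemma linear_dderiv: "smooth_fun V \<Longrightarrow> linear (\<lambda>h. dderiv V h p)"
  using bounded_linear_dderiv bounded_linear.linear by blast

lemma dderiv_add: "smooth_fun V \<Longrightarrow> dderiv V (h + k) p = dderiv V h p + dderiv V k p"
  using linear_add[OF linear_dderiv] by blast

lemma dderiv_scaleR: "smooth_fun V \<Longrightarrow> dderiv V (r *\<^sub>R h) p = r *\<^sub>R dderiv V h p"
  using linear_scale[OF linear_dderiv] by blast

lemma dderiv_minus: "smooth_fun V \<Longrightarrow> dderiv V (- h) p = - dderiv V h p"
  using linear_neg[OF linear_dderiv] by blast

lemma dderiv_zero: "smooth_fun V \<Longrightarrow> dderiv V 0 p = 0"
  using linear_0[OF linear_dderiv] by blast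

lemma dderiv_sum: "smooth_fun V \<Longrightarrow> dderiv V (\<Sum>i\<in>S. h i) p = (\<Sum>i\<in>S. dderiv V (h i) p)"
  using linear_sum[OF linear_dderiv] by blast

lemma dderiv_eq: "(V has_derivative D) (at p) \<Longrightarrow> dderiv V h p = D h"
  unfolding dderiv_def using frechet_derivative_at by metis

lemma dderiv_bounded_linear_comp:
  assumes "smooth_fun V" and "bounded_linear L"
  shows "dderiv (\<lambda>q. L (V q)) h p = L (dderiv V h p)"
  using bounded_linear.has_derivative[OF assms(2) smooth_fun_has_derivative[OF assms(1)]]
  by (rule dderiv_eq)

lemma smooth_fun_bounded_linear_comp:
  fixes L :: "'b::real_normed_vector \<Rightarrow> 'c::real_normed_vector" and V :: "'a::real_normed_vector \<Rightarrow> 'b"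
  assumes L: "bounded_linear L" and V: "smooth_fun V"
  shows "smooth_fun (\<lambda>p. L (V p))"
proof -
  have "smooth_fun V \<Longrightarrow> iter_dd es (\<lambda>p. L (V p)) = (\<lambda>p. L (iter_dd es V p))" for es V
  proof (induction es arbitrary: V)
    case (Cons e es)
    have "dderiv (\<lambda>p. L (V p)) e = (\<lambda>p. L (dderiv V e p))"
      using dderiv_bounded_linear_comp[OF Cons.prems L] by blast
    then show ?case
      using Cons.IH[OF smooth_fun_dderiv[OF Cons.prems]] by (simp only: iter_dd_Cons_dderiv)
  qed simp
  note iter_comp = this
  show ?thesis unfolding smooth_fun_def
  proof (intro allI)
    fix es p
    obtain D where "(iter_dd es V has_derivative D) (at p)"
      using V unfolding smooth_fun_def differentiable_def by blast
    then have "((\<lambda>p. L (iter_dd es V p)) has_derivative (\<lambda>h. L (D h))) (at p)"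
      by (rule bounded_linear.has_derivative[OF L])
    then show "iter_dd es (\<lambda>p. L (V p)) differentiable (at p)"
      unfolding iter_comp[OF V] differentiable_def by blast
  qed
qed

lemma smooth_fun_const: "smooth_fun (\<lambda>p. C)"
proof -
  have "iter_dd es (\<lambda>p. C) differentiable (at p)" for es and C :: "'b::real_normed_vector"
    and p :: "'a::real_normed_vector"
  proof (induction es arbitrary: C)
    case (Cons e es)
    have "dderiv (\<lambda>p. C) e = (\<lambda>p. 0)"
      by (rule ext, rule dderiv_eq[OF has_derivative_const])
    then show ?case using Cons by (simp add: iter_dd_Cons_dderiv)
  qed simp
  then show ?thesis unfolding smooth_fun_def by blast
qed

lemma smooth_fun_from_derivative:
  assumes D: "\<And>p. (V has_derivative D p) (at p)" and S: "\<And>h. smooth_fun (\<lambda>p. D p h)"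
  shows "smooth_fun V"
  unfolding smooth_fun_def
proof (intro allI)
  fix es p
  show "iter_dd es V differentiable (at p)"
  proof (cases es)
    case Nil then show ?thesis using D by (auto simp: differentiable_def)
  next
    case (Cons e es')
    have "dderiv V e = (\<lambda>p. D p e)" by (rule ext, rule dderiv_eq[OF D])
    then show ?thesis using S[of e] unfolding Cons iter_dd_Cons_dderiv smooth_fun_def by simp
  qed
qed

lemma has_derivative_zero_imp_constant:
  assumes "\<And>p. (f has_derivative (\<lambda>h. 0)) (at p)"
  shows "f p = f q"
proof -
  obtain C where "\<forall>x\<in>UNIV. f x = C"
    using has_derivative_zero_constant[of UNIV f] assms by (auto intro: has_derivative_at_withinI)
  then show ?thesis by simp
qed

lemma has_vector_derivative_comp_dderiv:
  assumes V: "(V has_derivative (\<lambda>h. dderiv V h (\<gamma> t))) (at (\<gamma> t))"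
    and \<gamma>: "(\<gamma> has_vector_derivative \<gamma>') (at t)"
  shows "((\<lambda>s. V (\<gamma> s)) has_vector_derivative dderiv V \<gamma>' (\<gamma> t)) (at t)"
  using vector_derivative_diff_chain_within[OF \<gamma> has_derivative_at_withinI[OF V]]
  by (simp add: o_def)

text \<open>Symmetry of second derivatives: the second difference below is symmetric in \<open>h\<close> and \<open>k\<close>,
  and divided by \<open>s\<^sup>2\<close> it tends to \<open>d\<^sup>2W(h, k)\<close> as \<open>s \<rightarrow> 0\<^sup>+\<close>.\<close>

lemma second_difference_mean_value:
  fixes W :: "'a::real_normed_vector \<Rightarrow> real"
  assumes W: "\<And>q. (W has_derivative (\<lambda>h. dderiv W h q)) (at q)" and s: "s > 0"
  obtains \<theta> where "0 < \<theta>" "\<theta> < s"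
    "W (p + s *\<^sub>R h + s *\<^sub>R k) - W (p + s *\<^sub>R h) - W (p + s *\<^sub>R k) + W p
       = s * (dderiv W h (p + \<theta> *\<^sub>R h + s *\<^sub>R k) - dderiv W h (p + \<theta> *\<^sub>R h))"
proof -
  define \<phi> where "\<phi> r = W (p + r *\<^sub>R h + s *\<^sub>R k) - W (p + r *\<^sub>R h)" for r
  have der: "(\<phi> has_real_derivative
          (dderiv W h (p + r *\<^sub>R h + s *\<^sub>R k) - dderiv W h (p + r *\<^sub>R h))) (at r)" for r
  proof -
    have l1: "((\<lambda>r. p + r *\<^sub>R h + s *\<^sub>R k) has_vector_derivative h) (at r)"
      and l2: "((\<lambda>r. p + r *\<^sub>R h) has_vector_derivative h) (at r)"
      by (auto intro!: derivative_eq_intros)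
    show ?thesis
      unfolding \<phi>_def has_real_derivative_iff_has_vector_derivative
      by (rule has_vector_derivative_diff[OF has_vector_derivative_comp_dderiv[OF W l1]
            has_vector_derivative_comp_dderiv[OF W l2]])
  qed
  obtain \<theta> where "0 < \<theta>" "\<theta> < s" and "\<phi> s - \<phi> 0
      = (s - 0) * (dderiv W h (p + \<theta> *\<^sub>R h + s *\<^sub>R k) - dderiv W h (p + \<theta> *\<^sub>R h))"
    using MVT2[of 0 s \<phi>, OF _ der] s by auto
  moreover have "\<phi> s - \<phi> 0 = W (p + s *\<^sub>R h + s *\<^sub>R k) - W (p + s *\<^sub>R h) - W (p + s *\<^sub>R k) + W p"
    unfolding \<phi>_def by (simp add: add.commute)
  ultimately show ?thesis using that by simp
qed

lemma second_difference_estimate: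
  fixes W :: "'a::real_normed_vector \<Rightarrow> real"
  assumes W: "\<And>q. (W has_derivative (\<lambda>h. dderiv W h q)) (at q)" and L: "linear L"
    and R: "\<And>y. norm y \<le> s * (norm h + norm k) \<Longrightarrow> \<bar>dderiv W h (p + y) - dderiv W h p - L y\<bar> \<le> \<epsilon>"
    and s: "s > 0"
  shows "\<bar>(W (p + s *\<^sub>R h + s *\<^sub>R k) - W (p + s *\<^sub>R h) - W (p + s *\<^sub>R k) + W p) - s\<^sup>2 * L k\<bar> \<le> 2 * s * \<epsilon>"
proof -
  obtain \<theta> where \<theta>: "0 < \<theta>" "\<theta> < s" and mv:
    "W (p + s *\<^sub>R h + s *\<^sub>R k) - W (p + s *\<^sub>R h) - W (p + s *\<^sub>R k) + W p
       = s * (dderiv W h (p + \<theta> *\<^sub>R h + s *\<^sub>R k) - dderiv W h (p + \<theta> *\<^sub>R h))"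
    using second_difference_mean_value[OF W s] .
  have th: "norm (\<theta> *\<^sub>R h) = \<theta> * norm h" using \<theta> by simp
  have "\<theta> * norm h \<le> s * norm h" using \<theta> by (simp add: mult_right_mono)
  moreover have "norm (\<theta> *\<^sub>R h + s *\<^sub>R k) \<le> \<theta> * norm h + s * norm k"
    using norm_triangle_ineq[of "\<theta> *\<^sub>R h" "s *\<^sub>R k"] th s by (simp only: norm_scaleR)
  moreover have "0 \<le> s * norm k" using s by simp
  moreover have "s * (norm h + norm k) = s * norm h + s * norm k" by (simp add: algebra_simps)
  ultimately have n1: "norm (\<theta> *\<^sub>R h + s *\<^sub>R k) \<le> s * (norm h + norm k)"
    and n2: "norm (\<theta> *\<^sub>R h) \<le> s * (norm h + norm k)"
    using th by linarith+
  have "L (\<theta> *\<^sub>R h + s *\<^sub>R k) - L (\<theta> *\<^sub>R h) = s * L k"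
    using L by (simp add: linear_add linear_scale)
  then have "\<bar>(dderiv W h (p + \<theta> *\<^sub>R h + s *\<^sub>R k) - dderiv W h (p + \<theta> *\<^sub>R h)) - s * L k\<bar> \<le> 2 * \<epsilon>"
    using R[OF n1] R[OF n2] unfolding add.assoc by arith
  then show ?thesis
    unfolding mv using s by (simp add: power2_eq_square abs_mult right_diff_distrib[symmetric] mult.assoc)
qed

lemma second_difference_tendsto:
  fixes W :: "'a::real_normed_vector \<Rightarrow> real"
  assumes W: "\<And>q. (W has_derivative (\<lambda>h. dderiv W h q)) (at q)"
    and D2: "(dderiv W h has_derivative L) (at p)"
  shows "((\<lambda>s. (W (p + s *\<^sub>R h + s *\<^sub>R k) - W (p + s *\<^sub>R h) - W (p + s *\<^sub>R k) + W p) / s\<^sup>2)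
           \<longlongrightarrow> L k) (at_right 0)"
proof (rule tendstoI)
  fix e :: real assume e: "e > 0"
  define K where "K = norm h + norm k + 1"
  have K: "K > 0" unfolding K_def by (simp add: add_nonneg_pos)
  have e': "e / (3 * K) > 0" using e K by simp
  from D2 have L: "linear L" and "\<forall>e>0. \<exists>d>0. \<forall>y. norm (y - p) < d \<longrightarrow>
      norm (dderiv W h y - dderiv W h p - L (y - p)) \<le> e * norm (y - p)"
    unfolding has_derivative_at_alt using bounded_linear.linear by blast+
  then obtain d where d: "d > 0" and R: "\<And>y. norm (y - p) < d \<Longrightarrow>
      \<bar>dderiv W h y - dderiv W h p - L (y - p)\<bar> \<le> e / (3 * K) * norm (y - p)"
    using e' by (metis real_norm_def)
  have "dist ((W (p + s *\<^sub>R h + s *\<^sub>R k) - W (p + s *\<^sub>R h) - W (p + s *\<^sub>R k) + W p) / s\<^sup>2) (L k) < e"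
    if s: "0 < s" "s < d / K" for s
  proof -
    have "\<bar>dderiv W h (p + y) - dderiv W h p - L y\<bar> \<le> e * s / 3" if y: "norm y \<le> s * (norm h + norm k)" for y
    proof -
      have "norm y \<le> s * K" using y s unfolding K_def by (simp add: algebra_simps)
      moreover have "s * K < d" using s K by (simp add: field_simps)
      ultimately have "\<bar>dderiv W h (p + y) - dderiv W h p - L y\<bar> \<le> e / (3 * K) * norm y"
        using R[of "p + y"] by simp
      also have "\<dots> \<le> e / (3 * K) * (s * K)" using \<open>norm y \<le> s * K\<close> e' by (intro mult_left_mono) simp_all
      also have "\<dots> = e * s / 3" using K by simp
      finally show ?thesis .
    qed
    from second_difference_estimate[where s = s and h = h and k = k and p = p, OF W L this s(1)]
    have "\<bar>(W (p + s *\<^sub>R h + s *\<^sub>R k) - W (p + s *\<^sub>R h) - W (p + s *\<^sub>R k) + W p) - s\<^sup>2 * L k\<bar>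
        / s\<^sup>2 \<le> 2 * e / 3"
      using s by (simp add: pos_divide_le_eq power2_eq_square mult_ac)
    moreover have "(W (p + s *\<^sub>R h + s *\<^sub>R k) - W (p + s *\<^sub>R h) - W (p + s *\<^sub>R k) + W p) / s\<^sup>2 - L k
        = ((W (p + s *\<^sub>R h + s *\<^sub>R k) - W (p + s *\<^sub>R h) - W (p + s *\<^sub>R k) + W p) - s\<^sup>2 * L k) / s\<^sup>2"
      using s by (simp add: diff_divide_distrib)
    ultimately have "dist ((W (p + s *\<^sub>R h + s *\<^sub>R k) - W (p + s *\<^sub>R h) - W (p + s *\<^sub>R k) + W p) / s\<^sup>2)
        (L k) \<le> 2 * e / 3"
      by (simp add: dist_real_def abs_divide)
    then show ?thesis using e by linarith
  qed
  then show "eventually (\<lambda>s. dist ((W (p + s *\<^sub>R h + s *\<^sub>R k) - W (p + s *\<^sub>R h)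
      - W (p + s *\<^sub>R k) + W p) / s\<^sup>2) (L k) < e) (at_right 0)"
    unfolding eventually_at_right_field using d K by (intro exI[of _ "d / K"]) simp
qed

lemma dderiv_commute_real:
  fixes W :: "'a::real_normed_vector \<Rightarrow> real"
  assumes W: "smooth_fun W"
  shows "dderiv (dderiv W h) k p = dderiv (dderiv W k) h p"
proof -
  have dW: "\<And>q. (W has_derivative (\<lambda>h. dderiv W h q)) (at q)"
    using smooth_fun_has_derivative[OF W] .
  have d2W: "(dderiv W l has_derivative (\<lambda>m. dderiv (dderiv W l) m p)) (at p)" for l
    by (rule smooth_fun_has_derivative[OF smooth_fun_dderiv[OF W]])
  have "(\<lambda>s. (W (p + s *\<^sub>R k + s *\<^sub>R h) - W (p + s *\<^sub>R k) - W (p + s *\<^sub>R h) + W p) / s\<^sup>2)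
      = (\<lambda>s. (W (p + s *\<^sub>R h + s *\<^sub>R k) - W (p + s *\<^sub>R h) - W (p + s *\<^sub>R k) + W p) / s\<^sup>2)"
    by (simp add: algebra_simps)
  then have "((\<lambda>s. (W (p + s *\<^sub>R h + s *\<^sub>R k) - W (p + s *\<^sub>R h) - W (p + s *\<^sub>R k) + W p) / s\<^sup>2)
      \<longlongrightarrow> dderiv (dderiv W k) h p) (at_right 0)"
    using second_difference_tendsto[OF dW d2W, of k h] by simp
  then show ?thesis
    using tendsto_unique[OF trivial_limit_at_right_real second_difference_tendsto[OF dW d2W, of h k]] by simp
qed

lemma dderiv_commute:
  fixes V :: "'a::real_normed_vector \<Rightarrow> 'b::real_inner"
  assumes V: "smooth_fun V"
  shows "dderiv (dderiv V h) k p = dderiv (dderiv V k) h p"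
proof -
  have "e \<bullet> dderiv (dderiv V h) k p = e \<bullet> dderiv (dderiv V k) h p" for e
  proof -
    have W: "smooth_fun (\<lambda>q. e \<bullet> V q)"
      by (rule smooth_fun_bounded_linear_comp[OF bounded_linear_inner_right V])
    have "dderiv (\<lambda>q. e \<bullet> V q) l = (\<lambda>q. e \<bullet> dderiv V l q)" for l
      using dderiv_bounded_linear_comp[OF V bounded_linear_inner_right] by blast
    then have "dderiv (dderiv (\<lambda>q. e \<bullet> V q) l) m p = e \<bullet> dderiv (dderiv V l) m p" for l m
      using dderiv_bounded_linear_comp[OF smooth_fun_dderiv[OF V] bounded_linear_inner_right] by simp
    then show ?thesis using dderiv_commute_real[OF W, of h k p] by simp
  qed
  from this[of "dderiv (dderiv V h) k p - dderiv (dderiv V k) h p"]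
  have "norm (dderiv (dderiv V h) k p - dderiv (dderiv V k) h p) ^ 2 = 0"
    by (simp add: power2_norm_eq_inner inner_diff_right)
  then show ?thesis by simp
qed

lemma dderiv_basis_expansion:
  fixes V :: "'a::euclidean_space \<Rightarrow> 'b::real_normed_vector"
  assumes "smooth_fun V"
  shows "dderiv V h p = (\<Sum>b\<in>Basis. (inner h b) *\<^sub>R dderiv V b p)"
proof -
  have "dderiv V h p = dderiv V (\<Sum>b\<in>Basis. (inner h b) *\<^sub>R b) p" by (simp add: euclidean_representation)
  also have "\<dots> = (\<Sum>b\<in>Basis. (inner h b) *\<^sub>R dderiv V b p)"
    using assms by (simp add: dderiv_sum dderiv_scaleR)
  finally show ?thesis .
qed

lemma dderiv_lincomb:
  assumes "\<And>b. b \<in> S \<Longrightarrow> smooth_fun (W b)"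
  shows "dderiv (\<lambda>q. \<Sum>b\<in>S. c b *\<^sub>R W b q) l p = (\<Sum>b\<in>S. c b *\<^sub>R dderiv (W b) l p)"
proof -
  have "((\<lambda>q. \<Sum>b\<in>S. c b *\<^sub>R W b q) has_derivative (\<lambda>l. \<Sum>b\<in>S. c b *\<^sub>R dderiv (W b) l p)) (at p)"
    by (intro has_derivative_sum bounded_linear.has_derivative[OF bounded_linear_scaleR_right]
        smooth_fun_has_derivative assms)
  then show ?thesis by (rule dderiv_eq)
qed

lemma dderiv2_basis_expansion:
  fixes V :: "'a::euclidean_space \<Rightarrow> 'b::real_normed_vector"
  assumes V: "smooth_fun V"
  shows "dderiv (dderiv V h) l p = (\<Sum>b\<in>Basis. (inner h b) *\<^sub>R dderiv (dderiv V b) l p)"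
proof -
  have "dderiv V h = (\<lambda>q. \<Sum>b\<in>Basis. (inner h b) *\<^sub>R dderiv V b q)"
    using dderiv_basis_expansion[OF V] by blast
  then show ?thesis using dderiv_lincomb[of Basis "\<lambda>b. dderiv V b" "\<lambda>b. inner h b" l p] smooth_fun_dderiv[OF V] by simp
qed

lemma has_vector_derivative_dderiv_curve:
  fixes V :: "'a::euclidean_space \<Rightarrow> 'b::real_normed_vector"
  assumes V: "smooth_fun V"
    and hd: "(hc has_vector_derivative h') (at t)"
    and gd: "(\<gamma> has_vector_derivative \<gamma>') (at t)"
  shows "((\<lambda>s. dderiv V (hc s) (\<gamma> s)) has_vector_derivative
           (dderiv V h' (\<gamma> t) + dderiv (dderiv V (hc t)) \<gamma>' (\<gamma> t))) (at t)"
proof -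
  have eq: "(\<lambda>s. dderiv V (hc s) (\<gamma> s)) = (\<lambda>s. \<Sum>b\<in>Basis. (inner (hc s) b) *\<^sub>R dderiv V b (\<gamma> s))"
    using dderiv_basis_expansion[OF V] by blast
  have "((\<lambda>s. \<Sum>b\<in>Basis. (inner (hc s) b) *\<^sub>R dderiv V b (\<gamma> s)) has_vector_derivative
      (\<Sum>b\<in>Basis. (inner (hc t) b) *\<^sub>R dderiv (dderiv V b) \<gamma>' (\<gamma> t) + (inner h' b) *\<^sub>R dderiv V b (\<gamma> t))) (at t)"
  proof (intro has_vector_derivative_sum has_vector_derivative_scaleR)
    fix b :: 'a
    show "((\<lambda>s. inner (hc s) b) has_real_derivative inner h' b) (at t)"
      unfolding has_real_derivative_iff_has_vector_derivative
      by (rule bounded_linear.has_vector_derivative[OF bounded_linear_inner_left hd])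
    show "((\<lambda>s. dderiv V b (\<gamma> s)) has_vector_derivative dderiv (dderiv V b) \<gamma>' (\<gamma> t)) (at t)"
      by (rule has_vector_derivative_comp_dderiv[OF smooth_fun_has_derivative[OF smooth_fun_dderiv[OF V]] gd])
  qed
  moreover have "(\<Sum>b\<in>Basis. (inner (hc t) b) *\<^sub>R dderiv (dderiv V b) \<gamma>' (\<gamma> t) + (inner h' b) *\<^sub>R dderiv V b (\<gamma> t))
      = dderiv V h' (\<gamma> t) + dderiv (dderiv V (hc t)) \<gamma>' (\<gamma> t)"
    using dderiv_basis_expansion[OF V, of h'] dderiv2_basis_expansion[OF V, of "hc t"] by (simp add: sum.distrib add.commute)
  ultimately show ?thesis unfolding eq by simp
qed

lemma has_vector_derivative_dderiv2_curve:
  fixes V :: "'a::euclidean_space \<Rightarrow> 'b::real_normed_vector"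
  assumes V: "smooth_fun V"
    and hd: "(hc has_vector_derivative h') (at t)"
    and kd: "(kc has_vector_derivative k') (at t)"
    and gd: "(\<gamma> has_vector_derivative \<gamma>') (at t)"
  shows "((\<lambda>s. dderiv (dderiv V (hc s)) (kc s) (\<gamma> s)) has_vector_derivative
           (dderiv (dderiv V h') (kc t) (\<gamma> t) + dderiv (dderiv V (hc t)) k' (\<gamma> t)
            + dderiv (dderiv (dderiv V (hc t)) (kc t)) \<gamma>' (\<gamma> t))) (at t)"
proof -
  have eq: "(\<lambda>s. dderiv (dderiv V (hc s)) (kc s) (\<gamma> s))
      = (\<lambda>s. \<Sum>b\<in>Basis. (inner (hc s) b) *\<^sub>R dderiv (dderiv V b) (kc s) (\<gamma> s))"
    using dderiv2_basis_expansion[OF V] by blast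
  have "((\<lambda>s. \<Sum>b\<in>Basis. (inner (hc s) b) *\<^sub>R dderiv (dderiv V b) (kc s) (\<gamma> s)) has_vector_derivative
      (\<Sum>b\<in>Basis. (inner (hc t) b) *\<^sub>R (dderiv (dderiv V b) k' (\<gamma> t) + dderiv (dderiv (dderiv V b) (kc t)) \<gamma>' (\<gamma> t))
          + (inner h' b) *\<^sub>R dderiv (dderiv V b) (kc t) (\<gamma> t))) (at t)"
  proof (intro has_vector_derivative_sum has_vector_derivative_scaleR)
    fix b :: 'a
    show "((\<lambda>s. inner (hc s) b) has_real_derivative inner h' b) (at t)"
      unfolding has_real_derivative_iff_has_vector_derivative
      by (rule bounded_linear.has_vector_derivative[OF bounded_linear_inner_left hd])
    show "((\<lambda>s. dderiv (dderiv V b) (kc s) (\<gamma> s)) has_vector_derivative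
         dderiv (dderiv V b) k' (\<gamma> t) + dderiv (dderiv (dderiv V b) (kc t)) \<gamma>' (\<gamma> t)) (at t)"
      by (rule has_vector_derivative_dderiv_curve[OF smooth_fun_dderiv[OF V] kd gd])
  qed
  moreover have "(\<Sum>b\<in>Basis. (inner (hc t) b) *\<^sub>R (dderiv (dderiv V b) k' (\<gamma> t) + dderiv (dderiv (dderiv V b) (kc t)) \<gamma>' (\<gamma> t))
          + (inner h' b) *\<^sub>R dderiv (dderiv V b) (kc t) (\<gamma> t))
      = dderiv (dderiv V h') (kc t) (\<gamma> t) + dderiv (dderiv V (hc t)) k' (\<gamma> t) + dderiv (dderiv (dderiv V (hc t)) (kc t)) \<gamma>' (\<gamma> t)"
  proof -
    have a: "dderiv (dderiv V h') (kc t) (\<gamma> t) = (\<Sum>b\<in>Basis. (inner h' b) *\<^sub>R dderiv (dderiv V b) (kc t) (\<gamma> t))"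
      by (rule dderiv2_basis_expansion[OF V])
    have b: "dderiv (dderiv V (hc t)) k' (\<gamma> t) = (\<Sum>b\<in>Basis. (inner (hc t) b) *\<^sub>R dderiv (dderiv V b) k' (\<gamma> t))"
      by (rule dderiv2_basis_expansion[OF V])
    have "dderiv V (hc t) = (\<lambda>q. \<Sum>b\<in>Basis. (inner (hc t) b) *\<^sub>R dderiv V b q)"
      using dderiv_basis_expansion[OF V] by blast
    then have "dderiv (dderiv V (hc t)) (kc t) = (\<lambda>q. \<Sum>b\<in>Basis. (inner (hc t) b) *\<^sub>R dderiv (dderiv V b) (kc t) q)"
      using dderiv_lincomb[of Basis "\<lambda>b. dderiv V b" "\<lambda>b. inner (hc t) b" "kc t"] smooth_fun_dderiv[OF V] by auto
    then have c: "dderiv (dderiv (dderiv V (hc t)) (kc t)) \<gamma>' (\<gamma> t)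
        = (\<Sum>b\<in>Basis. (inner (hc t) b) *\<^sub>R dderiv (dderiv (dderiv V b) (kc t)) \<gamma>' (\<gamma> t))"
      using dderiv_lincomb[of Basis "\<lambda>b. dderiv (dderiv V b) (kc t)" "\<lambda>b. inner (hc t) b" "\<gamma>'"]
        smooth_fun_dderiv[OF smooth_fun_dderiv[OF V]] by auto
    show ?thesis unfolding a b c by (simp add: sum.distrib scaleR_add_right algebra_simps)
  qed
  ultimately show ?thesis unfolding eq by simp
qed

section \<open>The linearised operator along solutions\<close>

lemma norm_less_imp_sq_minus_inner_pos:
  fixes v :: "'a::real_inner"
  assumes "norm v < c"
  shows "c\<^sup>2 - v \<bullet> v > 0"
proof -
  have "(norm v)\<^sup>2 < c\<^sup>2" using assms by (smt (verit) norm_ge_zero power_strict_mono zero_less_numeral)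
  then show ?thesis by (simp add: power2_norm_eq_inner)
qed

lemma has_real_derivative_inner:
  assumes "(f has_vector_derivative f') (at x)" "(g has_vector_derivative g') (at x)"
  shows "((\<lambda>s. f s \<bullet> g s) has_real_derivative (f x \<bullet> g' + f' \<bullet> g x)) (at x)"
  unfolding has_real_derivative_iff_has_vector_derivative
  by (rule bounded_bilinear.has_vector_derivative[OF bounded_bilinear_inner assms])

lemma has_real_derivative_fst [derivative_intros]:
  "(f has_vector_derivative f') F \<Longrightarrow> ((\<lambda>s. fst (f s)) has_real_derivative fst f') F"
  unfolding has_real_derivative_iff_has_vector_derivative
  by (rule bounded_linear.has_vector_derivative[OF bounded_linear_fst])

lemma has_vector_derivative_snd [derivative_intros]:
  "(f has_vector_derivative f') F \<Longrightarrow> ((\<lambda>s. snd (f s)) has_vector_derivative snd f') F"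
  by (rule bounded_linear.has_vector_derivative[OF bounded_linear_snd])

definition linB_explicit :: "real \<Rightarrow> real^'n \<Rightarrow> real^'n \<Rightarrow> real^'n \<Rightarrow> real^'n \<Rightarrow> real^'n \<Rightarrow> real^'n" where
  "linB_explicit c v a e1 e2 e3 = e3 + (3 * (v \<bullet> a) / (c\<^sup>2 - v \<bullet> v)) *\<^sub>R e2
     + (3 * ((e1 \<bullet> a + v \<bullet> e2) * (c\<^sup>2 - v \<bullet> v) + (v \<bullet> a) * (2 * (v \<bullet> e1))) / (c\<^sup>2 - v \<bullet> v)\<^sup>2) *\<^sub>R a"

lemma linB_eq_explicit:
  assumes w: "c\<^sup>2 - v \<bullet> v \<noteq> 0"
  shows "linB c v a b e1 e2 e3 = linB_explicit c v a e1 e2 e3"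
proof -
  have l1: "((\<lambda>s. v + s *\<^sub>R e1) has_vector_derivative e1) (at 0)"
    and l2: "((\<lambda>s. a + s *\<^sub>R e2) has_vector_derivative e2) (at 0)"
    and l3: "((\<lambda>s. b + s *\<^sub>R e3) has_vector_derivative e3) (at 0)"
    by (auto intro!: derivative_eq_intros)
  have n: "((\<lambda>s. 3 * ((v + s *\<^sub>R e1) \<bullet> (a + s *\<^sub>R e2))) has_real_derivative 3 * (v \<bullet> e2 + e1 \<bullet> a)) (at 0)"
    using DERIV_cmult[OF has_real_derivative_inner[OF l1 l2], of 3] by simp
  have d: "((\<lambda>s. c\<^sup>2 - (v + s *\<^sub>R e1) \<bullet> (v + s *\<^sub>R e1)) has_real_derivative - (2 * (v \<bullet> e1))) (at 0)"
    using DERIV_diff[OF DERIV_const has_real_derivative_inner[OF l1 l1]] by (simp add: inner_commute)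
  have "((\<lambda>s. 3 * ((v + s *\<^sub>R e1) \<bullet> (a + s *\<^sub>R e2)) / (c\<^sup>2 - (v + s *\<^sub>R e1) \<bullet> (v + s *\<^sub>R e1)))
     has_real_derivative 3 * ((e1 \<bullet> a + v \<bullet> e2) * (c\<^sup>2 - v \<bullet> v) + (v \<bullet> a) * (2 * (v \<bullet> e1))) / (c\<^sup>2 - v \<bullet> v)\<^sup>2) (at 0)"
    using DERIV_divide[OF n d] w by (simp add: power2_eq_square algebra_simps)
  from has_vector_derivative_add[OF l3 has_vector_derivative_scaleR[OF this l2]]
  have "((\<lambda>s. Bsys c (v + s *\<^sub>R e1) (a + s *\<^sub>R e2) (b + s *\<^sub>R e3)) has_vector_derivative
          linB_explicit c v a e1 e2 e3) (at 0)"
    unfolding Bsys_def linB_explicit_def by (simp add: add.assoc)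
  then show ?thesis unfolding linB_def by (rule vector_derivative_at)
qed

text \<open>On a solution \<open>b = jerk c v a\<close> is forced by \<open>B = 0\<close>, and \<open>snap c v a\<close> is the resulting
  fourth derivative.\<close>

definition jerk :: "real \<Rightarrow> real^'n \<Rightarrow> real^'n \<Rightarrow> real^'n" where
  "jerk c v a = (-3 * (v \<bullet> a) / (c\<^sup>2 - v \<bullet> v)) *\<^sub>R a"

definition snap :: "real \<Rightarrow> real^'n \<Rightarrow> real^'n \<Rightarrow> real^'n" where
  "snap c v a = (-3 * ((a \<bullet> a + v \<bullet> jerk c v a) * (c\<^sup>2 - v \<bullet> v) + (v \<bullet> a) * (2 * (v \<bullet> a))) / (c\<^sup>2 - v \<bullet> v)\<^sup>2) *\<^sub>R a
      + (-3 * (v \<bullet> a) / (c\<^sup>2 - v \<bullet> v)) *\<^sub>R jerk c v a"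

lemma solution_has_derivatives:
  assumes "is_solution c I x" and "s \<in> I"
  shows "((vd ^^ k) x has_vector_derivative (vd ^^ Suc k) x s) (at s)"
  using assms unfolding is_solution_def smooth_curve_on_def by blast

lemma solution_jerk:
  assumes sol: "is_solution c I x" and t: "t \<in> I"
  shows "(vd ^^ 3) x t = jerk c (vd x t) ((vd ^^ 2) x t)"
proof -
  have "Bsys c (vd x t) ((vd ^^ 2) x t) ((vd ^^ 3) x t) = 0"
    using sol t unfolding is_solution_def by blast
  then show ?thesis unfolding Bsys_def jerk_def by (simp add: eq_neg_iff_add_eq_0)
qed

lemma solution_snap:
  assumes sol: "is_solution c I x" and t: "t \<in> I"
  shows "(vd ^^ 4) x t = snap c (vd x t) ((vd ^^ 2) x t)"
proof -
  define X where "X k = (vd ^^ k) x" for k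
  have XD: "(X k has_vector_derivative X (Suc k) t) (at t)" for k
    unfolding X_def by (rule solution_has_derivatives[OF sol t])
  have "norm (X 1 t) < c" using sol t unfolding is_solution_def X_def by simp
  then have w: "c\<^sup>2 - X 1 t \<bullet> X 1 t \<noteq> 0"
    using norm_less_imp_sq_minus_inner_pos by fastforce
  define q where "q s = -3 * (X 1 s \<bullet> X 2 s) / (c\<^sup>2 - X 1 s \<bullet> X 1 s)" for s
  define q' where "q' = -3 * ((X 2 t \<bullet> X 2 t + X 1 t \<bullet> X 3 t) * (c\<^sup>2 - X 1 t \<bullet> X 1 t)
      + (X 1 t \<bullet> X 2 t) * (2 * (X 1 t \<bullet> X 2 t))) / (c\<^sup>2 - X 1 t \<bullet> X 1 t)\<^sup>2"
  have "(q has_real_derivative q') (at t)"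
  proof -
    have n: "((\<lambda>s. -3 * (X 1 s \<bullet> X 2 s)) has_real_derivative -3 * (X 1 t \<bullet> X 3 t + X 2 t \<bullet> X 2 t)) (at t)"
      using DERIV_cmult[OF has_real_derivative_inner[OF XD[of 1] XD[of 2]], of "-3"] by (simp add: numeral_eq_Suc)
    have d: "((\<lambda>s. c\<^sup>2 - X 1 s \<bullet> X 1 s) has_real_derivative - (2 * (X 1 t \<bullet> X 2 t))) (at t)"
      using DERIV_diff[OF DERIV_const has_real_derivative_inner[OF XD[of 1] XD[of 1]]]
      by (simp add: numeral_eq_Suc inner_commute)
    show ?thesis
      unfolding q_def using DERIV_divide[OF n d w] unfolding q'_def
      by (simp add: power2_eq_square algebra_simps inner_commute)
  qed
  from has_vector_derivative_scaleR[OF this XD[of 2]]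
  have "((\<lambda>s. q s *\<^sub>R X 2 s) has_vector_derivative q t *\<^sub>R X 3 t + q' *\<^sub>R X 2 t) (at t)"
    by (simp add: numeral_eq_Suc)
  moreover have "X 3 s = q s *\<^sub>R X 2 s" if "s \<in> I" for s
    using solution_jerk[OF sol that] unfolding X_def q_def jerk_def by simp
  ultimately have "(X 3 has_vector_derivative q t *\<^sub>R X 3 t + q' *\<^sub>R X 2 t) (at t)"
    using has_vector_derivative_transform_within_open[of "\<lambda>s. q s *\<^sub>R X 2 s" _ t I "X 3"] sol t
    unfolding is_solution_def by metis
  then have "X 4 t = q' *\<^sub>R X 2 t + q t *\<^sub>R X 3 t"
    using XD[of 3] vector_derivative_unique_at by (simp add: numeral_eq_Suc add.commute)
  then show ?thesis
    using solution_jerk[OF sol t] unfolding X_def snap_def q'_def q_def jerk_def by simp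
qed

lemma vd_at: "(f has_vector_derivative f') (at t) \<Longrightarrow> vd f t = f'"
  unfolding vd_def by (rule vector_derivative_at)

lemma vd_iterates_eq:
  assumes I: "open I" "t \<in> I"
    and d0: "\<And>s. s \<in> I \<Longrightarrow> (f has_vector_derivative f1 s) (at s)"
    and d1: "\<And>s. s \<in> I \<Longrightarrow> (f1 has_vector_derivative f2 s) (at s)"
    and d2: "\<And>s. s \<in> I \<Longrightarrow> (f2 has_vector_derivative f3 s) (at s)"
  shows "vd f t = f1 t" "(vd ^^ 2) f t = f2 t" "(vd ^^ 3) f t = f3 t"
proof -
  have v1: "vd f s = f1 s" if "s \<in> I" for s
    unfolding vd_def by (rule vector_derivative_at[OF d0[OF that]])
  have v2: "vd (vd f) s = f2 s" if "s \<in> I" for s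
    unfolding vd_def[of "vd f"] using has_vector_derivative_transform_within_open[OF d1[OF that] I(1) that] v1
    by (metis vector_derivative_at)
  have "vd (vd (vd f)) t = f3 t"
    unfolding vd_def[of "vd (vd f)"] using has_vector_derivative_transform_within_open[OF d2[OF I(2)] I] v2
    by (metis vector_derivative_at)
  then show "vd f t = f1 t" "(vd ^^ 2) f t = f2 t" "(vd ^^ 3) f t = f3 t"
    using v1 v2 I(2) by (simp_all add: numeral_eq_Suc)
qed

lemma has_vector_derivative_smooth_comp_order3:
  fixes V :: "'a::euclidean_space \<Rightarrow> 'b::real_normed_vector"
  assumes V: "smooth_fun V"
    and d0: "(\<gamma> has_vector_derivative \<gamma>1 t) (at t)"
    and d1: "(\<gamma>1 has_vector_derivative \<gamma>2 t) (at t)"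
    and d2: "(\<gamma>2 has_vector_derivative \<gamma>3 t) (at t)"
  shows "((\<lambda>s. V (\<gamma> s)) has_vector_derivative dderiv V (\<gamma>1 t) (\<gamma> t)) (at t)"
    and "((\<lambda>s. dderiv V (\<gamma>1 s) (\<gamma> s)) has_vector_derivative
           dderiv V (\<gamma>2 t) (\<gamma> t) + dderiv (dderiv V (\<gamma>1 t)) (\<gamma>1 t) (\<gamma> t)) (at t)"
    and "((\<lambda>s. dderiv V (\<gamma>2 s) (\<gamma> s) + dderiv (dderiv V (\<gamma>1 s)) (\<gamma>1 s) (\<gamma> s)) has_vector_derivative
           (dderiv V (\<gamma>3 t) (\<gamma> t) + dderiv (dderiv V (\<gamma>2 t)) (\<gamma>1 t) (\<gamma> t))
           + (dderiv (dderiv V (\<gamma>2 t)) (\<gamma>1 t) (\<gamma> t) + dderiv (dderiv V (\<gamma>1 t)) (\<gamma>2 t) (\<gamma> t)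
              + dderiv (dderiv (dderiv V (\<gamma>1 t)) (\<gamma>1 t)) (\<gamma>1 t) (\<gamma> t))) (at t)"
proof -
  show "((\<lambda>s. V (\<gamma> s)) has_vector_derivative dderiv V (\<gamma>1 t) (\<gamma> t)) (at t)"
    by (rule has_vector_derivative_comp_dderiv[OF smooth_fun_has_derivative[OF V] d0])
  show "((\<lambda>s. dderiv V (\<gamma>1 s) (\<gamma> s)) has_vector_derivative
           dderiv V (\<gamma>2 t) (\<gamma> t) + dderiv (dderiv V (\<gamma>1 t)) (\<gamma>1 t) (\<gamma> t)) (at t)"
    by (rule has_vector_derivative_dderiv_curve[OF V d1 d0])
  show "((\<lambda>s. dderiv V (\<gamma>2 s) (\<gamma> s) + dderiv (dderiv V (\<gamma>1 s)) (\<gamma>1 s) (\<gamma> s)) has_vector_derivative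
           (dderiv V (\<gamma>3 t) (\<gamma> t) + dderiv (dderiv V (\<gamma>2 t)) (\<gamma>1 t) (\<gamma> t))
           + (dderiv (dderiv V (\<gamma>2 t)) (\<gamma>1 t) (\<gamma> t) + dderiv (dderiv V (\<gamma>1 t)) (\<gamma>2 t) (\<gamma> t)
              + dderiv (dderiv (dderiv V (\<gamma>1 t)) (\<gamma>1 t)) (\<gamma>1 t) (\<gamma> t))) (at t)"
    by (rule has_vector_derivative_add[OF has_vector_derivative_dderiv_curve[OF V d2 d0]
          has_vector_derivative_dderiv2_curve[OF V d1 d1 d0]])
qed

lemma has_vector_derivative_variation_order3:
  fixes G :: "real \<Rightarrow> real \<times> 'a::real_normed_vector"
  assumes "(G has_vector_derivative G1 t) (at t)" "(G1 has_vector_derivative G2 t) (at t)"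
    "(G2 has_vector_derivative G3 t) (at t)" "(u has_vector_derivative u1 t) (at t)"
    "(u1 has_vector_derivative u2 t) (at t)" "(u2 has_vector_derivative u3 t) (at t)"
  shows "((\<lambda>s. snd (G s) - fst (G s) *\<^sub>R u s) has_vector_derivative
           snd (G1 t) - fst (G1 t) *\<^sub>R u t - fst (G t) *\<^sub>R u1 t) (at t)"
    and "((\<lambda>s. snd (G1 s) - fst (G1 s) *\<^sub>R u s - fst (G s) *\<^sub>R u1 s) has_vector_derivative
           snd (G2 t) - fst (G2 t) *\<^sub>R u t - (2 * fst (G1 t)) *\<^sub>R u1 t - fst (G t) *\<^sub>R u2 t) (at t)"
    and "((\<lambda>s. snd (G2 s) - fst (G2 s) *\<^sub>R u s - (2 * fst (G1 s)) *\<^sub>R u1 s - fst (G s) *\<^sub>R u2 s)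
           has_vector_derivative snd (G3 t) - fst (G3 t) *\<^sub>R u t - (3 * fst (G2 t)) *\<^sub>R u1 t
             - (3 * fst (G1 t)) *\<^sub>R u2 t - fst (G t) *\<^sub>R u3 t) (at t)"
proof -
  have expand: "(2 * r) *\<^sub>R x = r *\<^sub>R x + r *\<^sub>R x" "(3 * r) *\<^sub>R x = r *\<^sub>R x + r *\<^sub>R x + r *\<^sub>R x"
    for r and x :: 'a
    by (simp_all add: scaleR_add_left[symmetric])
  show "((\<lambda>s. snd (G s) - fst (G s) *\<^sub>R u s) has_vector_derivative
           snd (G1 t) - fst (G1 t) *\<^sub>R u t - fst (G t) *\<^sub>R u1 t) (at t)"
    by (auto intro!: derivative_eq_intros assms simp: algebra_simps)
  show "((\<lambda>s. snd (G1 s) - fst (G1 s) *\<^sub>R u s - fst (G s) *\<^sub>R u1 s) has_vector_derivative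
           snd (G2 t) - fst (G2 t) *\<^sub>R u t - (2 * fst (G1 t)) *\<^sub>R u1 t - fst (G t) *\<^sub>R u2 t) (at t)"
    unfolding expand by (auto intro!: derivative_eq_intros assms simp: algebra_simps)
  show "((\<lambda>s. snd (G2 s) - fst (G2 s) *\<^sub>R u s - (2 * fst (G1 s)) *\<^sub>R u1 s - fst (G s) *\<^sub>R u2 s)
           has_vector_derivative snd (G3 t) - fst (G3 t) *\<^sub>R u t - (3 * fst (G2 t)) *\<^sub>R u1 t
             - (3 * fst (G1 t)) *\<^sub>R u2 t - fst (G t) *\<^sub>R u3 t) (at t)"
    unfolding expand by (auto intro!: derivative_eq_intros assms simp: algebra_simps)
qed

text \<open>\<open>linB\<close> applied to the derivatives of the functional variation \<open>\<xi> - x' f\<close> along a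
  solution with velocity \<open>v\<close> and acceleration \<open>a\<close>: here \<open>f\<close> is the time component of \<open>V\<close> on the
  solution and \<open>G\<^sub>k\<close> is the \<open>k\<close>-th time derivative of \<open>V\<close> along it.\<close>

definition prolonged_linB :: "real \<Rightarrow> real^'n \<Rightarrow> real^'n \<Rightarrow> real \<Rightarrow> real \<times> (real^'n)
    \<Rightarrow> real \<times> (real^'n) \<Rightarrow> real \<times> (real^'n) \<Rightarrow> real^'n" where
  "prolonged_linB c v a f G1 G2 G3 = linB_explicit c v a
     (snd G1 - fst G1 *\<^sub>R v - f *\<^sub>R a)
     (snd G2 - fst G2 *\<^sub>R v - (2 * fst G1) *\<^sub>R a - f *\<^sub>R jerk c v a)
     (snd G3 - fst G3 *\<^sub>R v - (3 * fst G2) *\<^sub>R a - (3 * fst G1) *\<^sub>R jerk c v a - f *\<^sub>R snap c v a)"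

text \<open>With \<open>Dv = dV(1,v)\<close>, \<open>Da = dV(0,a)\<close>, \<open>Dvv = d\<^sup>2V((1,v),(1,v))\<close>, \<open>Dva = d\<^sup>2V((1,v),(0,a))\<close> and
  \<open>Dvvv = d\<^sup>3V((1,v),(1,v),(1,v))\<close>, the time derivatives of \<open>V\<close> along a solution through \<open>p\<close> with
  velocity \<open>v\<close> and acceleration \<open>a\<close> are \<open>Dv\<close>, \<open>Da + Dvv\<close> and \<open>dV(0,jerk) + 3 Dva + Dvvv\<close>.\<close>

definition determining_jet :: "real \<Rightarrow> real^'n \<Rightarrow> real^'n \<Rightarrow> real \<Rightarrow> real \<times> (real^'n) \<Rightarrow> real \<times> (real^'n)
    \<Rightarrow> real \<times> (real^'n) \<Rightarrow> real \<times> (real^'n) \<Rightarrow> real \<times> (real^'n) \<Rightarrow> real^'n" where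
  "determining_jet c v a f Dv Da Dvv Dva Dvvv = prolonged_linB c v a f Dv (Da + Dvv)
      ((-3 * (v \<bullet> a) / (c\<^sup>2 - v \<bullet> v)) *\<^sub>R Da + 3 *\<^sub>R Dva + Dvvv)"

definition determining_expr :: "real \<Rightarrow> (real \<times> (real^'n) \<Rightarrow> real \<times> (real^'n)) \<Rightarrow> real \<times> (real^'n)
    \<Rightarrow> real^'n \<Rightarrow> real^'n \<Rightarrow> real^'n" where
  "determining_expr c V p v a = determining_jet c v a (fst (V p)) (dderiv V (1, v) p) (dderiv V (0, a) p)
      (dderiv (dderiv V (1, v)) (1, v) p) (dderiv (dderiv V (1, v)) (0, a) p)
      (dderiv (dderiv (dderiv V (1, v)) (1, v)) (1, v) p)"

lemma determining_jet_zero_accel: "determining_jet c v 0 f Dv 0 Dvv 0 Dvvv = snd Dvvv - fst Dvvv *\<^sub>R v"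
  unfolding determining_jet_def prolonged_linB_def linB_explicit_def jerk_def snap_def by simp

lemma determining_jet_even_part:
  fixes v a :: "real^'n"
  assumes W: "c\<^sup>2 - v \<bullet> v = W" and w: "W \<noteq> 0"
  shows "determining_jet c v a f (F1, X1) (Fa, Xa) (F2, X2) (F2a, X2a) (F3, X3)
       + determining_jet c v (-a) f (F1, X1) (-Fa, -Xa) (F2, X2) (-F2a, -X2a) (F3, X3)
       - 2 *\<^sub>R determining_jet c v 0 f (F1, X1) 0 (F2, X2) 0 (F3, X3)
     = (6 / W\<^sup>2 * (W * (- c\<^sup>2 * Fa + v \<bullet> Xa + X1 \<bullet> a)
          + (v \<bullet> a) * (2 * (- c\<^sup>2 * F1 + v \<bullet> X1)))) *\<^sub>R a"
proof -
  have c2: "c\<^sup>2 = W + v \<bullet> v" using W by simp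
  show ?thesis
  unfolding determining_jet_def prolonged_linB_def linB_explicit_def jerk_def snap_def W
  apply (simp add: vec_eq_iff inner_diff_left inner_diff_right inner_add_left inner_add_right
      inner_commute[of a v] inner_commute[of X1 v] c2)
  apply (simp add: field_simps power2_eq_square w)
  done
qed

lemma determining_jet_decomp:
  fixes v a :: "real^'n"
  assumes W: "c\<^sup>2 - v \<bullet> v = W" and w: "W \<noteq> 0"
  shows "determining_jet c v a f (F1, X1) (Fa, Xa) (F2, X2) (F2a, X2a) (F3, X3)
     = (X3 - F3 *\<^sub>R v) + (3 / W) *\<^sub>R (W *\<^sub>R (X2a - F2a *\<^sub>R v) + (v \<bullet> a) *\<^sub>R (X2 - F2 *\<^sub>R v) + (v \<bullet> X2 - c\<^sup>2 * F2) *\<^sub>R a)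
       + (3 / W\<^sup>2 * (W * (- c\<^sup>2 * Fa + v \<bullet> Xa + X1 \<bullet> a)
          + (v \<bullet> a) * (2 * (- c\<^sup>2 * F1 + v \<bullet> X1)))) *\<^sub>R a"
proof -
  have c2: "c\<^sup>2 = W + v \<bullet> v" using W by simp
  show ?thesis
  unfolding determining_jet_def prolonged_linB_def linB_explicit_def jerk_def snap_def W
  apply (simp add: vec_eq_iff inner_diff_left inner_diff_right inner_add_left inner_add_right
      inner_commute[of a v] inner_commute[of X1 v] c2)
  apply (simp add: field_simps power2_eq_square w)
  done
qed

lemma determining_expr_eq_prolonged_linB:
  fixes V :: "real \<times> (real^'n) \<Rightarrow> real \<times> (real^'n)"
  assumes V: "smooth_fun V"
  shows "determining_expr c V p v a = prolonged_linB c v a (fst (V p)) (dderiv V (1, v) p)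
      (dderiv V (0, a) p + dderiv (dderiv V (1, v)) (1, v) p)
      ((dderiv V (0, jerk c v a) p + dderiv (dderiv V (0, a)) (1, v) p)
       + (dderiv (dderiv V (0, a)) (1, v) p + dderiv (dderiv V (1, v)) (0, a) p
          + dderiv (dderiv (dderiv V (1, v)) (1, v)) (1, v) p))"
proof -
  have jerk: "(0, jerk c v a) = (-3 * (v \<bullet> a) / (c\<^sup>2 - v \<bullet> v)) *\<^sub>R (0::real, a)"
    unfolding jerk_def by simp
  have three: "3 *\<^sub>R y = y + y + y" for y :: "real \<times> (real^'n)"
    using scaleR_add_left[of 2 1 y] by (simp add: scaleR_2)
  show ?thesis
    unfolding determining_expr_def determining_jet_def dderiv_commute[OF V, of "(0, a)"] jerk
      dderiv_scaleR[OF V] three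
    by (simp add: algebra_simps)
qed

lemma linB_variation_eq_determining_expr:
  fixes V :: "real \<times> (real^'n) \<Rightarrow> real \<times> (real^'n)" and x :: "real \<Rightarrow> real^'n"
  assumes V: "smooth_fun V" and sol: "is_solution c I x" and t: "t \<in> I"
  defines "\<delta> \<equiv> (\<lambda>t. snd (V (t, x t)) - fst (V (t, x t)) *\<^sub>R vd x t)"
  shows "linB c (vd x t) ((vd ^^ 2) x t) ((vd ^^ 3) x t) (vd \<delta> t) ((vd ^^ 2) \<delta> t) ((vd ^^ 3) \<delta> t)
       = determining_expr c V (t, x t) (vd x t) ((vd ^^ 2) x t)"
proof -
  define X where "X k = (vd ^^ k) x" for k
  have I: "open I" using sol unfolding is_solution_def by blast
  have XD: "(X k has_vector_derivative X (Suc k) s) (at s)" if "s \<in> I" for k s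
    unfolding X_def by (rule solution_has_derivatives[OF sol that])
  have XD': "(X 1 has_vector_derivative X 2 s) (at s)" "(X 2 has_vector_derivative X 3 s) (at s)"
    "(X 3 has_vector_derivative X 4 s) (at s)" if "s \<in> I" for s
    using XD[OF that, of 1] XD[OF that, of 2] XD[OF that, of 3] by (simp_all add: numeral_eq_Suc)
  define \<gamma> where "\<gamma> s = (s, x s)" for s
  define \<gamma>1 where "\<gamma>1 s = (1::real, X 1 s)" for s
  define \<gamma>2 where "\<gamma>2 s = (0::real, X 2 s)" for s
  define \<gamma>3 where "\<gamma>3 s = (0::real, X 3 s)" for s
  have \<gamma>D: "(\<gamma> has_vector_derivative \<gamma>1 s) (at s)" "(\<gamma>1 has_vector_derivative \<gamma>2 s) (at s)"
    "(\<gamma>2 has_vector_derivative \<gamma>3 s) (at s)" if "s \<in> I" for s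
    using XD[OF that, of 0] XD[OF that, of 1] XD[OF that, of 2]
    unfolding \<gamma>_def \<gamma>1_def \<gamma>2_def \<gamma>3_def X_def
    by (auto simp: numeral_eq_Suc intro!: has_vector_derivative_Pair derivative_intros)
  define g1 where "g1 s = dderiv V (\<gamma>1 s) (\<gamma> s)" for s
  define g2 where "g2 s = dderiv V (\<gamma>2 s) (\<gamma> s) + dderiv (dderiv V (\<gamma>1 s)) (\<gamma>1 s) (\<gamma> s)" for s
  define g3 where "g3 s = (dderiv V (\<gamma>3 s) (\<gamma> s) + dderiv (dderiv V (\<gamma>2 s)) (\<gamma>1 s) (\<gamma> s))
     + (dderiv (dderiv V (\<gamma>2 s)) (\<gamma>1 s) (\<gamma> s) + dderiv (dderiv V (\<gamma>1 s)) (\<gamma>2 s) (\<gamma> s)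
        + dderiv (dderiv (dderiv V (\<gamma>1 s)) (\<gamma>1 s)) (\<gamma>1 s) (\<gamma> s))" for s
  have gD: "((\<lambda>s. V (\<gamma> s)) has_vector_derivative g1 s) (at s)" "(g1 has_vector_derivative g2 s) (at s)"
    "(g2 has_vector_derivative g3 s) (at s)" if "s \<in> I" for s
    using has_vector_derivative_smooth_comp_order3[OF V, of \<gamma> \<gamma>1 s \<gamma>2 \<gamma>3, OF \<gamma>D[OF that]]
    unfolding g1_def[abs_def] g2_def[abs_def] g3_def by blast+
  define \<delta>1 where "\<delta>1 s = snd (g1 s) - fst (g1 s) *\<^sub>R X 1 s - fst (V (\<gamma> s)) *\<^sub>R X 2 s" for s
  define \<delta>2 where "\<delta>2 s = snd (g2 s) - fst (g2 s) *\<^sub>R X 1 s - (2 * fst (g1 s)) *\<^sub>R X 2 s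
      - fst (V (\<gamma> s)) *\<^sub>R X 3 s" for s
  define \<delta>3 where "\<delta>3 s = snd (g3 s) - fst (g3 s) *\<^sub>R X 1 s - (3 * fst (g2 s)) *\<^sub>R X 2 s
      - (3 * fst (g1 s)) *\<^sub>R X 3 s - fst (V (\<gamma> s)) *\<^sub>R X 4 s" for s
  have "\<delta> = (\<lambda>s. snd (V (\<gamma> s)) - fst (V (\<gamma> s)) *\<^sub>R X 1 s)"
    unfolding \<delta>_def \<gamma>_def X_def by simp
  moreover have "((\<lambda>s. snd (V (\<gamma> s)) - fst (V (\<gamma> s)) *\<^sub>R X 1 s) has_vector_derivative \<delta>1 s) (at s)"
    "(\<delta>1 has_vector_derivative \<delta>2 s) (at s)" "(\<delta>2 has_vector_derivative \<delta>3 s) (at s)" if "s \<in> I" for s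
    using has_vector_derivative_variation_order3[of "\<lambda>s. V (\<gamma> s)" g1 s g2 g3 "X 1" "X 2" "X 3" "X 4",
        OF gD[OF that] XD'[OF that]]
    unfolding \<delta>1_def[abs_def] \<delta>2_def[abs_def] \<delta>3_def by (simp_all add: numeral_eq_Suc)
  ultimately have \<delta>_iter: "vd \<delta> t = \<delta>1 t" "(vd ^^ 2) \<delta> t = \<delta>2 t" "(vd ^^ 3) \<delta> t = \<delta>3 t"
    using vd_iterates_eq[OF I t] by blast+
  have "norm (X 1 t) < c" using sol t unfolding is_solution_def X_def by simp
  then have "c\<^sup>2 - X 1 t \<bullet> X 1 t \<noteq> 0" using norm_less_imp_sq_minus_inner_pos by fastforce
  then have lhs: "linB c (vd x t) ((vd ^^ 2) x t) ((vd ^^ 3) x t) (vd \<delta> t) ((vd ^^ 2) \<delta> t) ((vd ^^ 3) \<delta> t)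
      = linB_explicit c (X 1 t) (X 2 t) (\<delta>1 t) (\<delta>2 t) (\<delta>3 t)"
    unfolding \<delta>_iter by (simp add: X_def linB_eq_explicit)
  have jerk: "X 3 t = jerk c (X 1 t) (X 2 t)" and snap: "X 4 t = snap c (X 1 t) (X 2 t)"
    using solution_jerk[OF sol t] solution_snap[OF sol t] by (simp_all add: X_def)
  have "determining_expr c V (t, x t) (vd x t) ((vd ^^ 2) x t)
      = prolonged_linB c (X 1 t) (X 2 t) (fst (V (\<gamma> t))) (g1 t) (g2 t) (g3 t)"
    unfolding determining_expr_eq_prolonged_linB[OF V] g1_def g2_def g3_def \<gamma>3_def jerk
    by (simp add: X_def \<gamma>_def \<gamma>1_def \<gamma>2_def)
  also have "\<dots> = linB_explicit c (X 1 t) (X 2 t) (\<delta>1 t) (\<delta>2 t) (\<delta>3 t)"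
    unfolding prolonged_linB_def \<delta>1_def \<delta>2_def \<delta>3_def jerk snap ..
  finally show ?thesis unfolding lhs ..
qed

section \<open>Solutions through every admissible jet\<close>

lemma vd_funpow_eq_of_derivs:
  assumes "Y 0 = x" "\<And>k t. (Y k has_vector_derivative Y (Suc k) t) (at t)"
  shows "(vd ^^ k) x = Y k"
proof (induction k)
  case 0 then show ?case using assms(1) by simp
next
  case (Suc k)
  have "(vd ^^ Suc k) x = vd (Y k)" using Suc by simp
  also have "\<dots> = Y (Suc k)" using vd_at[OF assms(2)] by blast
  finally show ?case .
qed

lemma smooth_curve_on_UNIV_of_derivs:
  assumes "Y 0 = x" "\<And>k t. (Y k has_vector_derivative Y (Suc k) t) (at t)"
  shows "smooth_curve_on UNIV x"
  unfolding smooth_curve_on_def using vd_funpow_eq_of_derivs[OF assms] assms(2) vd_at[OF assms(2)] by simp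

lemma line_is_solution:
  fixes x0 v0 :: "real^'n"
  assumes "norm v0 < c"
  shows "is_solution c UNIV (\<lambda>t. x0 + (t - t0) *\<^sub>R v0) \<and> vd (\<lambda>t. x0 + (t - t0) *\<^sub>R v0) t0 = v0
     \<and> (vd ^^ 2) (\<lambda>t. x0 + (t - t0) *\<^sub>R v0) t0 = 0"
proof -
  define Y :: "nat \<Rightarrow> real \<Rightarrow> real^'n" where
    "Y k = (if k = 0 then (\<lambda>t. x0 + (t - t0) *\<^sub>R v0) else if k = 1 then (\<lambda>t. v0) else (\<lambda>t. 0))" for k
  have D: "(Y k has_vector_derivative Y (Suc k) t) (at t)" for k t
    unfolding Y_def by (cases "k = 0") (auto intro!: derivative_eq_intros)
  have Y0: "Y 0 = (\<lambda>t. x0 + (t - t0) *\<^sub>R v0)" unfolding Y_def by simp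
  have E: "(vd ^^ k) (\<lambda>t. x0 + (t - t0) *\<^sub>R v0) = Y k" for k by (rule vd_funpow_eq_of_derivs[OF Y0 D])
  show ?thesis
    unfolding is_solution_def using smooth_curve_on_UNIV_of_derivs[OF Y0 D] E[of 1] E[of 2] E[of 3] assms
    by (simp add: Y_def Bsys_def)
qed

text \<open>\<open>hyp_deriv \<kappa> h0 t0 k\<close> is the \<open>k\<close>-th derivative of \<open>t \<mapsto> sqrt (1 + H t\<^sup>2)\<close>, where
  \<open>H t = h0 + \<kappa> (t - t0)\<close>, in the form \<open>\<kappa>\<^sup>k P\<^sub>k(H) (1 + H\<^sup>2)\<^bsup>1/2 - k\<^esup>\<close>.\<close>

fun hyp_poly :: "nat \<Rightarrow> real poly" where
  "hyp_poly 0 = 1"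
| "hyp_poly (Suc k) = pderiv (hyp_poly k) * [:1, 0, 1:] + smult (1 - 2 * real k) ([:0, 1:] * hyp_poly k)"

definition hyp_deriv :: "real \<Rightarrow> real \<Rightarrow> real \<Rightarrow> nat \<Rightarrow> real \<Rightarrow> real" where
  "hyp_deriv \<kappa> h0 t0 k t = \<kappa> ^ k * poly (hyp_poly k) (h0 + \<kappa> * (t - t0)) * (1 + (h0 + \<kappa> * (t - t0))\<^sup>2) powr (1/2 - real k)"

lemma hyp_deriv_has_derivative: "(hyp_deriv \<kappa> h0 t0 k has_real_derivative hyp_deriv \<kappa> h0 t0 (Suc k) t) (at t)"
proof -
  define H where "H = h0 + \<kappa> * (t - t0)"
  define r where "r = 1/2 - real k"
  have q0: "1 + H\<^sup>2 > 0" by (simp add: add_pos_nonneg)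
  have dH: "((\<lambda>t. h0 + \<kappa> * (t - t0)) has_real_derivative \<kappa>) (at t)"
    by (auto intro!: derivative_eq_intros)
  have dP: "((\<lambda>t. poly (hyp_poly k) (h0 + \<kappa> * (t - t0))) has_real_derivative poly (pderiv (hyp_poly k)) H * \<kappa>) (at t)"
    unfolding H_def by (rule DERIV_chain2[OF poly_DERIV dH])
  have dq: "((\<lambda>t. 1 + (h0 + \<kappa> * (t - t0))\<^sup>2) has_real_derivative 2 * H * \<kappa>) (at t)"
    unfolding H_def by (auto intro!: derivative_eq_intros)
  have dpow: "((\<lambda>t. (1 + (h0 + \<kappa> * (t - t0))\<^sup>2) powr r) has_real_derivative r * (1 + H\<^sup>2) powr (r - 1) * (2 * H * \<kappa>)) (at t)"
    using DERIV_fun_powr[OF dq, of r] q0 unfolding H_def by simp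
  have fe: "hyp_deriv \<kappa> h0 t0 k
      = (\<lambda>x. \<kappa> ^ k * (poly (hyp_poly k) (h0 + \<kappa> * (x - t0)) * (1 + (h0 + \<kappa> * (x - t0))\<^sup>2) powr r))"
    unfolding hyp_deriv_def r_def by (simp add: fun_eq_iff mult.assoc)
  have D: "(hyp_deriv \<kappa> h0 t0 k has_real_derivative \<kappa> ^ k * (poly (hyp_poly k) H * (r * (1 + H\<^sup>2) powr (r - 1) * (2 * H * \<kappa>))
              + poly (pderiv (hyp_poly k)) H * \<kappa> * (1 + H\<^sup>2) powr r)) (at t)"
    unfolding fe
    by (rule DERIV_cong[OF DERIV_cmult[OF DERIV_mult[OF dP dpow], of "\<kappa> ^ k"]]) (simp add: H_def algebra_simps)
  have pw: "(1 + H\<^sup>2) powr r = (1 + H\<^sup>2) * (1 + H\<^sup>2) powr (r - 1)"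
    using powr_add[of "1 + H\<^sup>2" 1 "r - 1"] q0 by simp
  have rr: "1/2 - real (Suc k) = r - 1" unfolding r_def by simp
  have pS: "poly (hyp_poly (Suc k)) H = poly (pderiv (hyp_poly k)) H * (1 + H\<^sup>2) + (1 - 2 * real k) * H * poly (hyp_poly k) H"
    by (simp add: power2_eq_square algebra_simps)
  have "\<kappa> ^ k * (poly (hyp_poly k) H * (r * (1 + H\<^sup>2) powr (r - 1) * (2 * H * \<kappa>))
              + poly (pderiv (hyp_poly k)) H * \<kappa> * (1 + H\<^sup>2) powr r) = hyp_deriv \<kappa> h0 t0 (Suc k) t"
    unfolding hyp_deriv_def H_def[symmetric] rr pS pw by (simp add: r_def algebra_simps)
  then show ?thesis using D by simp
qed

lemma powr_half_minus_of_nat: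
  assumes "q > 0" shows "q powr (1/2 - real k) = sqrt q / q ^ k"
proof -
  have "q powr (1/2 - real k) = q powr (1/2) * q powr (- real k)"
    using powr_add[of q "1/2" "- real k"] by simp
  also have "\<dots> = sqrt q * inverse (q ^ k)"
    unfolding powr_minus powr_realpow[OF assms] powr_half_sqrt[OF less_imp_le[OF assms]] ..
  also have "\<dots> = sqrt q / q ^ k" by (simp add: divide_inverse)
  finally show ?thesis .
qed

lemma hyp_deriv_eq_sqrt:
  "hyp_deriv \<kappa> h0 t0 k t = \<kappa> ^ k * poly (hyp_poly k) (h0 + \<kappa> * (t - t0))
      * sqrt (1 + (h0 + \<kappa> * (t - t0))\<^sup>2) / (1 + (h0 + \<kappa> * (t - t0))\<^sup>2) ^ k"
  unfolding hyp_deriv_def by (subst powr_half_minus_of_nat) (auto simp: add_pos_nonneg)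

lemma poly_hyp_poly_upto3: "poly (hyp_poly 0) h = 1" "poly (hyp_poly 1) h = h" "poly (hyp_poly 2) h = 1" "poly (hyp_poly 3) h = - 3 * h"
  by (simp_all add: numeral_eq_Suc pderiv_pCons pderiv_mult algebra_simps)

text \<open>Hyperbolic (uniformly accelerated) motion in the direction \<open>n\<close>, superposed with a drift
  \<open>vp \<bottom> n\<close>; the speed along \<open>n\<close> is \<open>C H / sqrt (1 + H\<^sup>2) < C\<close>.\<close>

lemma hyperbolic_motion_is_solution:
  fixes x0 vp n :: "real^'n" and h0 t0 :: real
  assumes c: "c > 0" and n: "n \<bullet> n = 1" and perp: "vp \<bullet> n = 0"
    and C: "C > 0" "C\<^sup>2 = c\<^sup>2 - vp \<bullet> vp" and \<kappa>: "\<kappa> > 0"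
  defines "x \<equiv> \<lambda>t. x0 + (t - t0) *\<^sub>R vp + ((C / \<kappa>) * (hyp_deriv \<kappa> h0 t0 0 t - hyp_deriv \<kappa> h0 t0 0 t0)) *\<^sub>R n"
  shows "is_solution c UNIV x" and "x t0 = x0"
    and "vd x t0 = vp + (C * h0 / sqrt (1 + h0\<^sup>2)) *\<^sub>R n"
    and "(vd ^^ 2) x t0 = (C * \<kappa> / ((1 + h0\<^sup>2) * sqrt (1 + h0\<^sup>2))) *\<^sub>R n"
proof -
  define \<Psi> where "\<Psi> = hyp_deriv \<kappa> h0 t0"
  define Y :: "nat \<Rightarrow> real \<Rightarrow> real^'n" where
    "Y k t = (if k = 0 then x t else (if k = 1 then vp else 0) + ((C / \<kappa>) * \<Psi> k t) *\<^sub>R n)" for k t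
  have D: "(Y k has_vector_derivative Y (Suc k) t) (at t)" for k t
    using hyp_deriv_has_derivative[of \<kappa> h0 t0 k t] \<kappa>
    unfolding Y_def[abs_def] x_def \<Psi>_def
    by (cases "k = 0") (auto intro!: derivative_eq_intros)
  have Y0: "Y 0 = x" by (simp add: Y_def fun_eq_iff)
  have E: "(vd ^^ k) x = Y k" for k by (rule vd_funpow_eq_of_derivs[OF Y0 D])
  define H where "H t = h0 + \<kappa> * (t - t0)" for t
  define q where "q t = 1 + (H t)\<^sup>2" for t
  define s where "s t = sqrt (q t)" for t
  have qpos: "q t > 0" for t unfolding q_def by (simp add: add_pos_nonneg)
  have spos: "s t > 0" for t unfolding s_def using qpos by simp
  have ss: "s t * s t = q t" for t unfolding s_def using qpos by (simp add: less_imp_le)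
  have \<Psi>: "(C / \<kappa>) * \<Psi> 1 t = C * H t / s t" "(C / \<kappa>) * \<Psi> 2 t = C * \<kappa> / (q t * s t)"
    "(C / \<kappa>) * \<Psi> 3 t = -3 * C * \<kappa>\<^sup>2 * H t / (q t * q t * s t)" for t
    unfolding \<Psi>_def hyp_deriv_eq_sqrt poly_hyp_poly_upto3 H_def[symmetric] q_def[symmetric] s_def[symmetric]
    using \<kappa> ss[of t] spos[of t] qpos[of t] by (simp_all add: field_simps power2_eq_square power3_eq_cube)
  have Y1: "Y 1 t = vp + (C * H t / s t) *\<^sub>R n"
    and Y2: "Y 2 t = (C * \<kappa> / (q t * s t)) *\<^sub>R n"
    and Y3: "Y 3 t = (-3 * C * \<kappa>\<^sup>2 * H t / (q t * q t * s t)) *\<^sub>R n" for t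
    unfolding Y_def \<Psi> by simp_all
  have nvp: "n \<bullet> vp = 0" using perp by (simp add: inner_commute)
  have in11: "Y 1 t \<bullet> Y 1 t = vp \<bullet> vp + C\<^sup>2 * (H t)\<^sup>2 / q t" for t
    unfolding Y1 using ss[of t] spos[of t]
    by (simp add: inner_add_left inner_add_right perp nvp n power2_eq_square field_simps)
  have in12: "Y 1 t \<bullet> Y 2 t = C\<^sup>2 * H t * \<kappa> / (q t * q t)" for t
    unfolding Y1 Y2 using ss[of t] spos[of t] qpos[of t]
    by (simp add: inner_add_left inner_add_right perp nvp n power2_eq_square field_simps)
  have den: "c\<^sup>2 - Y 1 t \<bullet> Y 1 t = C\<^sup>2 / q t" for t
    using qpos[of t] unfolding in11 C(2) q_def by (simp add: field_simps)
  have "Bsys c (Y 1 t) (Y 2 t) (Y 3 t) = (-3 * C * \<kappa>\<^sup>2 * H t / (q t * q t * s t)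
      + 3 * (C\<^sup>2 * H t * \<kappa> / (q t * q t)) / (C\<^sup>2 / q t) * (C * \<kappa> / (q t * s t))) *\<^sub>R n" for t
    unfolding Bsys_def den in12 unfolding Y3 Y2 by (simp only: scaleR_add_left scaleR_scaleR)
  also have "\<dots> t = 0" for t using qpos[of t] spos[of t] C by (simp add: field_simps power2_eq_square)
  finally have B0: "Bsys c (Y 1 t) (Y 2 t) (Y 3 t) = 0" for t .
  have "0 < C\<^sup>2 / q t" for t using C(1) qpos[of t] by simp
  then have "Y 1 t \<bullet> Y 1 t < c\<^sup>2" for t using den[of t] by (metis diff_gt_0_iff_gt)
  then have nY: "norm (Y 1 t) < c" for t
    using c by (metis inner_ge_zero norm_eq_sqrt_inner real_less_lsqrt less_eq_real_def)
  show "is_solution c UNIV x"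
    unfolding is_solution_def using smooth_curve_on_UNIV_of_derivs[OF Y0 D] E[of 1] E[of 2] E[of 3] B0 nY
    by (simp add: numeral_eq_Suc)
  show "x t0 = x0" unfolding x_def by simp
  have q0: "q t0 = 1 + h0\<^sup>2" and s0: "s t0 = sqrt (1 + h0\<^sup>2)" and H0: "H t0 = h0"
    unfolding s_def q_def H_def by simp_all
  show "vd x t0 = vp + (C * h0 / sqrt (1 + h0\<^sup>2)) *\<^sub>R n"
    using E[of 1] Y1[of t0] unfolding H0 s0 by simp
  show "(vd ^^ 2) x t0 = (C * \<kappa> / ((1 + h0\<^sup>2) * sqrt (1 + h0\<^sup>2))) *\<^sub>R n"
    using E[of 2] Y2[of t0] unfolding q0 s0 by simp
qed

lemma accelerated_solution_through_jet:
  fixes x0 v0 a0 :: "real^'n"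
  assumes v0: "norm v0 < c" and a0: "a0 \<noteq> 0"
  shows "\<exists>x. is_solution c UNIV x \<and> x t0 = x0 \<and> vd x t0 = v0 \<and> (vd ^^ 2) x t0 = a0"
proof -
  define n where "n = (1 / norm a0) *\<^sub>R a0"
  have na: "norm a0 > 0" using a0 by simp
  have n: "n \<bullet> n = 1" unfolding n_def using na by (simp add: power2_norm_eq_inner[symmetric] power2_eq_square)
  have an: "a0 = norm a0 *\<^sub>R n" unfolding n_def using na by simp
  define z0 where "z0 = v0 \<bullet> n"
  define vp where "vp = v0 - z0 *\<^sub>R n"
  have perp: "vp \<bullet> n = 0" unfolding vp_def z0_def by (simp add: inner_diff_left n)
  have vpvp: "vp \<bullet> vp = v0 \<bullet> v0 - z0\<^sup>2"
    unfolding vp_def z0_def by (simp add: inner_diff_left inner_diff_right n inner_commute power2_eq_square)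
  have c: "c > 0" using v0 norm_ge_zero[of v0] by linarith
  define W where "W = c\<^sup>2 - v0 \<bullet> v0"
  have W: "W > 0" unfolding W_def by (rule norm_less_imp_sq_minus_inner_pos[OF v0])
  define C where "C = sqrt (W + z0\<^sup>2)"
  have WZ: "W + z0\<^sup>2 > 0" using W by (simp add: add_pos_nonneg)
  have C: "C > 0" "C\<^sup>2 = W + z0\<^sup>2" unfolding C_def using WZ by simp_all
  have C': "C\<^sup>2 = c\<^sup>2 - vp \<bullet> vp" unfolding C vpvp W_def by simp
  define h0 where "h0 = z0 / sqrt W"
  define \<kappa> where "\<kappa> = norm a0 * C\<^sup>2 / (W * sqrt W)"
  have \<kappa>: "\<kappa> > 0" unfolding \<kappa>_def using na C(1) W by simp
  have sW: "sqrt W > 0" using W by simp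
  have q0: "1 + h0\<^sup>2 = C\<^sup>2 / W" unfolding h0_def C using W sW by (simp add: field_simps power2_eq_square)
  have s0: "sqrt (1 + h0\<^sup>2) = C / sqrt W" unfolding q0 using W C(1) by (simp add: real_sqrt_divide)
  have "C * h0 / sqrt (1 + h0\<^sup>2) = z0" unfolding s0 using C(1) sW by (simp add: h0_def field_simps)
  moreover have "C * \<kappa> / ((1 + h0\<^sup>2) * sqrt (1 + h0\<^sup>2)) = norm a0"
    unfolding s0 unfolding q0 \<kappa>_def using C(1) sW W by (simp add: field_simps power2_eq_square)
  ultimately show ?thesis
    using hyperbolic_motion_is_solution[OF c n perp C(1) C' \<kappa>, of x0 t0 h0] an
    unfolding vp_def by auto
qed

lemma solution_through_jet:
  fixes x0 v0 a0 :: "real^'n"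
  assumes "norm v0 < c"
  shows "\<exists>x. is_solution c UNIV x \<and> x t0 = x0 \<and> vd x t0 = v0 \<and> (vd ^^ 2) x t0 = a0"
proof (cases "a0 = 0")
  case True
  then show ?thesis
    using line_is_solution[OF assms, of x0 t0] by (intro exI[of _ "\<lambda>t. x0 + (t - t0) *\<^sub>R v0"]) simp
next
  case False
  then show ?thesis using accelerated_solution_through_jet[OF assms] by blast
qed

section \<open>Minkowski geometry\<close>

definition minkowski :: "real \<Rightarrow> real \<times> (real^'n) \<Rightarrow> real \<times> (real^'n) \<Rightarrow> real" where
  "minkowski c h k = - c\<^sup>2 * fst h * fst k + snd h \<bullet> snd k"

lemma minkowski_commute: "minkowski c h k = minkowski c k h"
  unfolding minkowski_def by (simp add: inner_commute mult_ac)

lemma bounded_linear_minkowski_right: "bounded_linear (minkowski c h)"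
  unfolding linear_conv_bounded_linear[symmetric]
  by (rule linearI) (simp_all add: minkowski_def inner_add_right algebra_simps)

lemma bounded_linear_minkowski_left: "bounded_linear (\<lambda>h. minkowski c h k)"
proof -
  have "(\<lambda>h. minkowski c h k) = minkowski c k" by (simp add: fun_eq_iff minkowski_commute)
  then show ?thesis using bounded_linear_minkowski_right[of c k] by simp
qed

lemma minkowski_add_right: "minkowski c h (k + l) = minkowski c h k + minkowski c h l"
  and minkowski_diff_right: "minkowski c h (k - l) = minkowski c h k - minkowski c h l"
  and minkowski_minus_right: "minkowski c h (- k) = - minkowski c h k"
  and minkowski_scaleR_right: "minkowski c h (r *\<^sub>R k) = r * minkowski c h k"
  using bounded_linear_minkowski_right[of c h]
  by (simp_all add: linear_add linear_diff linear_neg linear_scale bounded_linear.linear)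

lemma minkowski_add_left: "minkowski c (h + l) k = minkowski c h k + minkowski c l k"
  and minkowski_diff_left: "minkowski c (h - l) k = minkowski c h k - minkowski c l k"
  and minkowski_minus_left: "minkowski c (- h) k = - minkowski c h k"
  and minkowski_scaleR_left: "minkowski c (r *\<^sub>R h) k = r * minkowski c h k"
  by (simp_all add: minkowski_commute[of c _ k] minkowski_add_right minkowski_diff_right
      minkowski_minus_right minkowski_scaleR_right)

lemmas minkowski_simps = minkowski_add_right minkowski_diff_right minkowski_minus_right
  minkowski_scaleR_right minkowski_add_left minkowski_diff_left minkowski_minus_left minkowski_scaleR_left

lemma minkowski_nondegenerate:
  assumes c: "c \<noteq> 0" and eq: "\<And>h. minkowski c h X = minkowski c h Y"
  shows "X = Y"
proof -
  have "fst X = fst Y" using eq[of "(1, 0)"] c unfolding minkowski_def by simp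
  moreover have "(snd X - snd Y) \<bullet> (snd X - snd Y) = 0"
    using eq[of "(0, snd X - snd Y)"] unfolding minkowski_def by (simp add: inner_diff_right)
  ultimately show ?thesis by (simp add: prod_eq_iff)
qed

text \<open>A linear functional is determined by its values on the future timelike vectors \<open>(1, v)\<close>,
  \<open>|v| < c\<close>, because these span: \<open>(t, y) = (t - 1/\<epsilon>) (1, 0) + (1/\<epsilon>) (1, \<epsilon> y)\<close>.\<close>

lemma linear_eq_on_timelike:
  fixes F G :: "real \<times> (real^'n) \<Rightarrow> real"
  assumes c: "c > 0" and F: "linear F" and G: "linear G"
    and eq: "\<And>v. norm v < c \<Longrightarrow> F (1, v) = G (1, v)"
  shows "F k = G k"
proof -
  obtain h0 y where k: "k = (h0, y)" by (cases k)
  define \<epsilon> where "\<epsilon> = c / (2 * (norm y + 1))"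
  have \<epsilon>: "\<epsilon> > 0" unfolding \<epsilon>_def using c by (simp add: add_nonneg_pos)
  have "norm (\<epsilon> *\<^sub>R y) = c * norm y / (2 * (norm y + 1))"
    unfolding \<epsilon>_def using c by simp
  also have "\<dots> < c"
  proof -
    have "c * norm y < c * (2 * (norm y + 1))"
      using c by (intro mult_strict_left_mono) (auto simp: add_nonneg_pos)
    then show ?thesis by (simp add: pos_divide_less_eq add_nonneg_pos)
  qed
  finally have ny: "norm (\<epsilon> *\<^sub>R y) < c" .
  have n0: "norm (0::real^'n) < c" using c by simp
  have k': "k = (h0 - 1 / \<epsilon>) *\<^sub>R (1, 0) + (1 / \<epsilon>) *\<^sub>R (1, \<epsilon> *\<^sub>R y)" unfolding k using \<epsilon> by simp
  show ?thesis
    by (subst (1 2) k') (simp only: linear_add[OF F] linear_add[OF G] linear_scale[OF F] linear_scale[OF G]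
        eq[OF n0] eq[OF ny])
qed

text \<open>The quadratic part \<open>\<langle>p, g\<rangle> p - \<langle>p, p\<rangle> g / 2\<close> of a special conformal transformation,
  polarised.\<close>

definition special_conformal :: "real \<Rightarrow> real \<times> (real^'n) \<Rightarrow> real \<times> (real^'n) \<Rightarrow> real \<times> (real^'n)
    \<Rightarrow> real \<times> (real^'n)" where
  "special_conformal c g k l =
     (1/2) *\<^sub>R (minkowski c l g *\<^sub>R k + minkowski c k g *\<^sub>R l - minkowski c k l *\<^sub>R g)"

lemma special_conformal_commute: "special_conformal c g k l = special_conformal c g l k"
  unfolding special_conformal_def by (simp add: minkowski_commute algebra_simps)

lemma linear_special_conformal: "linear (special_conformal c g k)"
  by (rule linearI) (simp_all add: special_conformal_def minkowski_simps algebra_simps)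

lemma bounded_bilinear_special_conformal: "bounded_bilinear (special_conformal c g)"
proof -
  have "bilinear (special_conformal c g)" unfolding bilinear_def
    using linear_special_conformal[of c g] by (simp add: special_conformal_commute[of c g _])
  then show ?thesis by (simp add: bilinear_conv_bounded_bilinear)
qed

lemma special_conformal_killing:
  "minkowski c h (special_conformal c g k p) + minkowski c (special_conformal c g h p) k
     = minkowski c p g * minkowski c h k"
  unfolding special_conformal_def minkowski_simps
  by (simp add: minkowski_commute[of c _ h] minkowski_commute[of c g] minkowski_commute[of c p k] algebra_simps)

definition minkowski_dual :: "real \<Rightarrow> (real \<times> (real^'n) \<Rightarrow> real) \<Rightarrow> real \<times> (real^'n)" where
  "minkowski_dual c s = (- s (1, 0) / c\<^sup>2, \<chi> i. s (0, axis i 1))"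

lemma pair_basis_expansion: "((t::real), (x::real^'n)) = t *\<^sub>R (1, 0) + (\<Sum>j\<in>UNIV. (x $ j) *\<^sub>R (0, axis j 1))"
proof -
  have "(\<Sum>i\<in>UNIV. (x $ i) *\<^sub>R ((0::real), axis i (1::real))) = (0, \<Sum>i\<in>UNIV. (x $ i) *\<^sub>R axis i 1)"
    by (induction rule: infinite_finite_induct) (auto simp: zero_prod_def)
  also have "\<dots> = (0, x)" using basis_expansion[of x] by (simp add: scalar_mult_eq_scaleR)
  finally show ?thesis by simp
qed

lemma minkowski_dual:
  assumes c: "c \<noteq> 0" and s: "linear s"
  shows "minkowski c h (minkowski_dual c s) = s h"
proof -
  obtain h0 y where h: "h = (h0, y)" by (cases h)
  have "s h = h0 * s (1, 0) + (\<Sum>i\<in>UNIV. y $ i * s (0, axis i 1))"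
    unfolding h by (subst pair_basis_expansion)
      (simp only: linear_add[OF s] linear_sum[OF s] linear_scale[OF s] real_scaleR_def)
  moreover have "minkowski c h (minkowski_dual c s) = h0 * s (1, 0) + (\<Sum>i\<in>UNIV. y $ i * s (0, axis i 1))"
    unfolding minkowski_def minkowski_dual_def h using c by (simp add: inner_vec_def)
  ultimately show ?thesis by simp
qed

definition conformal_quadratic_field :: "real \<Rightarrow> (real \<times> (real^'n) \<Rightarrow> real \<times> (real^'n)) \<Rightarrow> bool" where
  "conformal_quadratic_field c V \<longleftrightarrow> (\<exists>Y0 A g \<sigma>. linear A
      \<and> (\<forall>h k. minkowski c h (A k) + minkowski c (A h) k = \<sigma> * minkowski c h k)
      \<and> (\<forall>p. V p = Y0 + A p + (1/2) *\<^sub>R special_conformal c g p p))"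

section \<open>Lie point symmetries are conformal quadratic fields\<close>

definition killing_form :: "real \<Rightarrow> (real \<times> (real^'n) \<Rightarrow> real \<times> (real^'n)) \<Rightarrow> real \<times> (real^'n)
    \<Rightarrow> real \<times> (real^'n) \<Rightarrow> real \<times> (real^'n) \<Rightarrow> real" where
  "killing_form c V p h k = minkowski c h (dderiv V k p) + minkowski c (dderiv V h p) k"

definition conformal_factor :: "(real \<times> (real^'n) \<Rightarrow> real \<times> (real^'n)) \<Rightarrow> real \<times> (real^'n) \<Rightarrow> real" where
  "conformal_factor V p = 2 * fst (dderiv V (1, 0) p)"

lemma killing_form_commute: "killing_form c V p h k = killing_form c V p k h"
  unfolding killing_form_def by (simp add: minkowski_commute)

lemma linear_killing_form: "smooth_fun V \<Longrightarrow> linear (killing_form c V p h)"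
  by (rule linearI) (simp_all add: killing_form_def dderiv_add dderiv_scaleR minkowski_simps algebra_simps)

lemma smooth_fun_conformal_factor: "smooth_fun V \<Longrightarrow> smooth_fun (conformal_factor V)"
  unfolding conformal_factor_def[abs_def]
  by (rule smooth_fun_bounded_linear_comp[OF bounded_linear_compose[OF bounded_linear_mult_right
        bounded_linear_fst] smooth_fun_dderiv])

lemma lie_point_symmetry_smooth: "lie_point_symmetry c V \<Longrightarrow> smooth_fun V"
  unfolding lie_point_symmetry_def by blast

lemma lie_point_symmetry_determining_expr:
  fixes V :: "real \<times> (real^'n) \<Rightarrow> real \<times> (real^'n)"
  assumes L: "lie_point_symmetry c V" and v: "norm v < c"
  shows "determining_expr c V p v a = 0"
proof -
  obtain t0 x0 where p: "p = (t0, x0)" by (cases p)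
  obtain x where sol: "is_solution c UNIV x" and "x t0 = x0" "vd x t0 = v" "(vd ^^ 2) x t0 = a"
    using solution_through_jet[OF v] by blast
  moreover have "linB c (vd x t0) ((vd ^^ 2) x t0) ((vd ^^ 3) x t0)
      (vd (\<lambda>t. snd (V (t, x t)) - fst (V (t, x t)) *\<^sub>R vd x t) t0)
      ((vd ^^ 2) (\<lambda>t. snd (V (t, x t)) - fst (V (t, x t)) *\<^sub>R vd x t) t0)
      ((vd ^^ 3) (\<lambda>t. snd (V (t, x t)) - fst (V (t, x t)) *\<^sub>R vd x t) t0) = 0"
    using L sol unfolding lie_point_symmetry_def Let_def by blast
  ultimately show ?thesis
    using linB_variation_eq_determining_expr[OF lie_point_symmetry_smooth[OF L] sol, of t0] p by simp
qed

text \<open>The part of the determining equation independent of the acceleration.\<close>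

lemma lie_point_symmetry_third_deriv_timelike:
  fixes V :: "real \<times> (real^'n) \<Rightarrow> real \<times> (real^'n)" and p :: "real \<times> (real^'n)"
  assumes L: "lie_point_symmetry c V" and v: "norm v < c"
  defines "D3 \<equiv> dderiv (dderiv (dderiv V (1, v)) (1, v)) (1, v) p"
  shows "D3 = fst D3 *\<^sub>R (1, v)"
proof -
  have V: "smooth_fun V" by (rule lie_point_symmetry_smooth[OF L])
  have "dderiv V (0, 0) p = 0" "dderiv (dderiv V (1, v)) (0, 0) p = 0"
    using dderiv_zero[OF V] dderiv_zero[OF smooth_fun_dderiv[OF V]] by (simp_all add: zero_prod_def)
  then have "snd D3 = fst D3 *\<^sub>R v"
    using lie_point_symmetry_determining_expr[OF L v, of p 0]
    unfolding determining_expr_def D3_def by (simp add: determining_jet_zero_accel)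
  then show ?thesis by (simp add: prod_eq_iff)
qed

text \<open>The part of the determining equation quadratic in the acceleration.\<close>

lemma lie_point_symmetry_killing_accel:
  fixes V :: "real \<times> (real^'n) \<Rightarrow> real \<times> (real^'n)"
  assumes L: "lie_point_symmetry c V" and v: "norm v < c"
  shows "minkowski c (1, v) (1, v) * killing_form c V p (1, v) (0, a)
       = minkowski c (1, v) (0, a) * killing_form c V p (1, v) (1, v)"
proof -
  have V: "smooth_fun V" by (rule lie_point_symmetry_smooth[OF L])
  define W where "W = c\<^sup>2 - v \<bullet> v"
  have W: "W > 0" unfolding W_def by (rule norm_less_imp_sq_minus_inner_pos[OF v])
  obtain F1 X1 where D1: "dderiv V (1, v) p = (F1, X1)" by fastforce
  obtain Fa Xa where Da: "dderiv V (0, a) p = (Fa, Xa)" by fastforce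
  obtain F2 X2 where Dvv: "dderiv (dderiv V (1, v)) (1, v) p = (F2, X2)" by fastforce
  obtain F2a X2a where Dva: "dderiv (dderiv V (1, v)) (0, a) p = (F2a, X2a)" by fastforce
  obtain F3 X3 where D3: "dderiv (dderiv (dderiv V (1, v)) (1, v)) (1, v) p = (F3, X3)" by fastforce
  have "dderiv V (0, -a) p = (-Fa, -Xa)" "dderiv (dderiv V (1, v)) (0, -a) p = (-F2a, -X2a)"
    using dderiv_minus[OF V, of "(0, a)" p] dderiv_minus[OF smooth_fun_dderiv[OF V, of "(1, v)"], of "(0, a)" p]
      Da Dva by simp_all
  moreover have "dderiv V (0, 0) p = 0" "dderiv (dderiv V (1, v)) (0, 0) p = 0"
    using dderiv_zero[OF V] dderiv_zero[OF smooth_fun_dderiv[OF V]] by (simp_all add: zero_prod_def)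
  moreover note P = lie_point_symmetry_determining_expr[OF L v, of p, unfolded determining_expr_def D1 Dvv D3]
  ultimately have "determining_jet c v a (fst (V p)) (F1, X1) (Fa, Xa) (F2, X2) (F2a, X2a) (F3, X3) = 0"
    "determining_jet c v (-a) (fst (V p)) (F1, X1) (-Fa, -Xa) (F2, X2) (-F2a, -X2a) (F3, X3) = 0"
    "determining_jet c v 0 (fst (V p)) (F1, X1) 0 (F2, X2) 0 (F3, X3) = 0"
    using P[of a] P[of "-a"] P[of 0] unfolding Da Dva by simp_all
  then have "(6 / W\<^sup>2 * (W * (- c\<^sup>2 * Fa + v \<bullet> Xa + X1 \<bullet> a) + (v \<bullet> a) * (2 * (- c\<^sup>2 * F1 + v \<bullet> X1))))
      *\<^sub>R a = 0"
    using determining_jet_even_part[OF W_def[symmetric], of a "fst (V p)" F1 X1 Fa Xa F2 X2 F2a X2a F3 X3] W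
    by simp
  moreover have "a = 0 \<Longrightarrow> Fa = 0 \<and> Xa = 0"
    using Da dderiv_zero[OF V, of p] by (simp add: zero_prod_def)
  ultimately have "W * (- c\<^sup>2 * Fa + v \<bullet> Xa + X1 \<bullet> a) + (v \<bullet> a) * (2 * (- c\<^sup>2 * F1 + v \<bullet> X1)) = 0"
    using W by auto
  then show ?thesis
    unfolding killing_form_def minkowski_def D1 Da W_def by (simp add: inner_commute algebra_simps)
qed

lemma lie_point_symmetry_killing_timelike:
  fixes V :: "real \<times> (real^'n) \<Rightarrow> real \<times> (real^'n)"
  assumes L: "lie_point_symmetry c V" and v: "norm v < c"
  shows "minkowski c (1, v) (1, v) * killing_form c V p (1, v) k
       = minkowski c (1, v) k * killing_form c V p (1, v) (1, v)"
proof -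
  obtain k0 y where k: "k = (k0, y)" by fastforce
  have k': "k = k0 *\<^sub>R (1, v) + (0, y - k0 *\<^sub>R v)" unfolding k by simp
  note K = linear_killing_form[OF lie_point_symmetry_smooth[OF L], of c p "(1, v)"]
  have "killing_form c V p (1, v) k
      = k0 * killing_form c V p (1, v) (1, v) + killing_form c V p (1, v) (0, y - k0 *\<^sub>R v)"
    by (subst k') (simp only: linear_add[OF K] linear_scale[OF K] real_scaleR_def)
  moreover have "minkowski c (1, v) k = k0 * minkowski c (1, v) (1, v) + minkowski c (1, v) (0, y - k0 *\<^sub>R v)"
    by (subst k') (simp only: minkowski_add_right minkowski_scaleR_right)
  ultimately show ?thesis
    using lie_point_symmetry_killing_accel[OF L v, of p "y - k0 *\<^sub>R v"] by (simp add: algebra_simps)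
qed

lemma lie_point_symmetry_conformal_killing:
  fixes V :: "real \<times> (real^'n) \<Rightarrow> real \<times> (real^'n)"
  assumes L: "lie_point_symmetry c V" and c: "c > 0"
  shows "killing_form c V p h k = conformal_factor V p * minkowski c h k"
proof -
  note K = linear_killing_form[OF lie_point_symmetry_smooth[OF L], of c p]
  define \<sigma> where "\<sigma> = conformal_factor V p"
  have c2: "c\<^sup>2 > 0" using c by simp
  have n0: "norm (0::real^'n) < c" using c by simp
  have K00: "killing_form c V p (1, 0) (1, 0) = - c\<^sup>2 * \<sigma>"
    unfolding killing_form_def minkowski_def \<sigma>_def conformal_factor_def by simp
  have K0: "killing_form c V p (1, 0) k = \<sigma> * minkowski c (1, 0) k" for k
  proof -
    have "c\<^sup>2 * killing_form c V p (1, 0) k = c\<^sup>2 * (\<sigma> * minkowski c (1, 0) k)"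
      using lie_point_symmetry_killing_timelike[OF L n0, of p k] unfolding K00
      by (simp add: minkowski_def algebra_simps power2_eq_square)
    then show ?thesis using c2 by simp
  qed
  have Kv: "killing_form c V p (1, v) k = \<sigma> * minkowski c (1, v) k" if v: "norm v < c" for v k
  proof -
    have vv: "minkowski c (1, v) (1, v) \<noteq> 0"
      using norm_less_imp_sq_minus_inner_pos[OF v] unfolding minkowski_def by simp
    have "killing_form c V p (1, v) (1, 0) = \<sigma> * minkowski c (1, v) (1, 0)"
      using K0[of "(1, v)"] by (simp add: killing_form_commute minkowski_commute)
    then have "c\<^sup>2 * killing_form c V p (1, v) (1, v) = c\<^sup>2 * (\<sigma> * minkowski c (1, v) (1, v))"
      using lie_point_symmetry_killing_timelike[OF L v, of p "(1, 0)"]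
      by (simp add: minkowski_def algebra_simps power2_eq_square)
    then have "killing_form c V p (1, v) (1, v) = \<sigma> * minkowski c (1, v) (1, v)" using c2 by simp
    then show ?thesis
      using lie_point_symmetry_killing_timelike[OF L v, of p k] vv by (simp add: algebra_simps)
  qed
  have "killing_form c V p h k = killing_form c V p k h" by (rule killing_form_commute)
  also have "\<dots> = \<sigma> * minkowski c k h"
  proof (rule linear_eq_on_timelike[OF c K])
    show "linear (\<lambda>h. \<sigma> * minkowski c k h)"
      by (rule bounded_linear.linear[OF bounded_linear_const_mult[OF bounded_linear_minkowski_right]])
    show "killing_form c V p k (1, v) = \<sigma> * minkowski c k (1, v)" if "norm v < c" for v
      using Kv[OF that, of k] by (simp add: killing_form_commute minkowski_commute)
  qed
  finally show ?thesis unfolding \<sigma>_def by (simp add: minkowski_commute)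
qed

lemma lie_point_symmetry_killing_deriv:
  fixes V :: "real \<times> (real^'n) \<Rightarrow> real \<times> (real^'n)"
  assumes L: "lie_point_symmetry c V" and c: "c > 0"
  shows "minkowski c h (dderiv (dderiv V k) l p) + minkowski c (dderiv (dderiv V h) l p) k
       = dderiv (conformal_factor V) l p * minkowski c h k"
proof -
  have V: "smooth_fun V" by (rule lie_point_symmetry_smooth[OF L])
  have "((\<lambda>p. minkowski c h (dderiv V k p) + minkowski c (dderiv V h p) k) has_derivative
      (\<lambda>l. minkowski c h (dderiv (dderiv V k) l p) + minkowski c (dderiv (dderiv V h) l p) k)) (at p)"
    by (intro has_derivative_add bounded_linear.has_derivative[OF bounded_linear_minkowski_right]
        bounded_linear.has_derivative[OF bounded_linear_minkowski_left] smooth_fun_has_derivative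
        smooth_fun_dderiv V)
  from dderiv_eq[OF this] have "minkowski c h (dderiv (dderiv V k) l p) + minkowski c (dderiv (dderiv V h) l p) k
      = dderiv (\<lambda>p. minkowski c h (dderiv V k p) + minkowski c (dderiv V h p) k) l p" by simp
  also have "(\<lambda>p. minkowski c h (dderiv V k p) + minkowski c (dderiv V h p) k)
      = (\<lambda>p. conformal_factor V p * minkowski c h k)"
    using lie_point_symmetry_conformal_killing[OF L c] unfolding killing_form_def by blast
  also have "((\<lambda>p. conformal_factor V p * minkowski c h k) has_derivative
      (\<lambda>l. dderiv (conformal_factor V) l p * minkowski c h k)) (at p)"
    by (intro bounded_linear.has_derivative[OF bounded_linear_mult_left] smooth_fun_has_derivative
        smooth_fun_conformal_factor V)
  from dderiv_eq[OF this] have "dderiv (\<lambda>p. conformal_factor V p * minkowski c h k) l p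
      = dderiv (conformal_factor V) l p * minkowski c h k" .
  finally show ?thesis .
qed

text \<open>Polarisation of the differentiated conformal Killing equation, using the symmetry of
  \<open>d\<^sup>2V\<close>.\<close>

lemma lie_point_symmetry_second_deriv:
  fixes V :: "real \<times> (real^'n) \<Rightarrow> real \<times> (real^'n)" and p :: "real \<times> (real^'n)"
  assumes L: "lie_point_symmetry c V" and c: "c > 0"
  defines "s \<equiv> \<lambda>h. dderiv (conformal_factor V) h p"
  shows "minkowski c h (dderiv (dderiv V k) l p)
       = (s l * minkowski c h k + s k * minkowski c h l - s h * minkowski c k l) / 2"
proof -
  have V: "smooth_fun V" by (rule lie_point_symmetry_smooth[OF L])
  define B where "B h k l = minkowski c h (dderiv (dderiv V k) l p)" for h k l
  have Bs: "B x y z = B x z y" for x y z unfolding B_def using dderiv_commute[OF V] by metis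
  have Ck: "B x y z + B y x z = s z * minkowski c x y" for x y z
    unfolding B_def s_def using lie_point_symmetry_killing_deriv[OF L c, of x y z p] minkowski_commute by metis
  have "2 * B h k l = s l * minkowski c h k + s k * minkowski c h l - s h * minkowski c k l"
    using Ck[of h k l] Ck[of h l k] Ck[of k l h] Bs[of h l k] Bs[of l h k] Bs[of k h l] by linarith
  then show ?thesis unfolding B_def by simp
qed

lemma lie_point_symmetry_third_deriv:
  fixes V :: "real \<times> (real^'n) \<Rightarrow> real \<times> (real^'n)" and m p :: "real \<times> (real^'n)"
  assumes L: "lie_point_symmetry c V" and c: "c > 0"
  defines "H \<equiv> \<lambda>h. dderiv (dderiv (conformal_factor V) h) m p"
  shows "minkowski c h (dderiv (dderiv (dderiv V k) l) m p)
       = (H l * minkowski c h k + H k * minkowski c h l - H h * minkowski c k l) / 2"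
proof -
  have V: "smooth_fun V" by (rule lie_point_symmetry_smooth[OF L])
  have S: "smooth_fun (conformal_factor V)" by (rule smooth_fun_conformal_factor[OF V])
  have "minkowski c h (dderiv (dderiv (dderiv V k) l) m p)
      = dderiv (\<lambda>p. minkowski c h (dderiv (dderiv V k) l p)) m p"
    by (rule dderiv_bounded_linear_comp[OF smooth_fun_dderiv[OF smooth_fun_dderiv[OF V]]
          bounded_linear_minkowski_right, symmetric])
  also have "(\<lambda>p. minkowski c h (dderiv (dderiv V k) l p)) = (\<lambda>p. (dderiv (conformal_factor V) l p * minkowski c h k
      + dderiv (conformal_factor V) k p * minkowski c h l - dderiv (conformal_factor V) h p * minkowski c k l) / 2)"
    using lie_point_symmetry_second_deriv[OF L c] by blast
  also have "((\<lambda>p. (dderiv (conformal_factor V) l p * minkowski c h k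
      + dderiv (conformal_factor V) k p * minkowski c h l - dderiv (conformal_factor V) h p * minkowski c k l) / 2)
      has_derivative (\<lambda>m. (dderiv (dderiv (conformal_factor V) l) m p * minkowski c h k
        + dderiv (dderiv (conformal_factor V) k) m p * minkowski c h l
        - dderiv (dderiv (conformal_factor V) h) m p * minkowski c k l) / 2)) (at p)"
    by (intro bounded_linear.has_derivative[OF bounded_linear_divide] has_derivative_add has_derivative_diff
        bounded_linear.has_derivative[OF bounded_linear_mult_left] smooth_fun_has_derivative smooth_fun_dderiv S)
  from dderiv_eq[OF this] have "dderiv (\<lambda>p. (dderiv (conformal_factor V) l p * minkowski c h k
      + dderiv (conformal_factor V) k p * minkowski c h l - dderiv (conformal_factor V) h p * minkowski c k l) / 2) m p
      = (H l * minkowski c h k + H k * minkowski c h l - H h * minkowski c k l) / 2"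
    unfolding H_def .
  finally show ?thesis .
qed

lemma lie_point_symmetry_hessian_conformal:
  fixes V :: "real \<times> (real^'n) \<Rightarrow> real \<times> (real^'n)"
  assumes L: "lie_point_symmetry c V" and c: "c > 0"
  obtains \<mu> where "\<And>h k. dderiv (dderiv (conformal_factor V) h) k p = \<mu> * minkowski c h k"
proof -
  have S: "smooth_fun (conformal_factor V)"
    by (rule smooth_fun_conformal_factor[OF lie_point_symmetry_smooth[OF L]])
  define H where "H h k = dderiv (dderiv (conformal_factor V) h) k p" for h k
  have Hs: "H x y = H y x" for x y unfolding H_def by (rule dderiv_commute[OF S])
  have c2: "c\<^sup>2 > 0" using c by simp
  define \<mu> where "\<mu> v = 2 * (H (1, v) (1, v) - fst (dderiv (dderiv (dderiv V (1, v)) (1, v)) (1, v) p))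
      / minkowski c (1, v) (1, v)" for v
  have Hv: "H h (1, v) = \<mu> v * minkowski c h (1, v)" if v: "norm v < c" for h v
  proof -
    have "minkowski c (1, v) (1, v) \<noteq> 0"
      using norm_less_imp_sq_minus_inner_pos[OF v] unfolding minkowski_def by simp
    moreover have "fst (dderiv (dderiv (dderiv V (1, v)) (1, v)) (1, v) p) * minkowski c h (1, v)
        = (H (1, v) (1, v) * minkowski c h (1, v) + H (1, v) (1, v) * minkowski c h (1, v)
           - H h (1, v) * minkowski c (1, v) (1, v)) / 2"
      using lie_point_symmetry_third_deriv[OF L c, of h "(1, v)" "(1, v)" "(1, v)" p]
      unfolding H_def
      by (subst (asm) lie_point_symmetry_third_deriv_timelike[OF L v]) (simp only: minkowski_scaleR_right)
    ultimately show ?thesis unfolding \<mu>_def by (simp add: field_simps)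
  qed
  have n0: "norm (0::real^'n) < c" using c by simp
  have Htl: "H h (1, v) = \<mu> 0 * minkowski c h (1, v)" if v: "norm v < c" for h v
  proof -
    have "H (1, 0) (1, v) = \<mu> v * (- c\<^sup>2)" "H (1, v) (1, 0) = \<mu> 0 * (- c\<^sup>2)"
      using Hv[OF v, of "(1, 0)"] Hv[OF n0, of "(1, v)"] unfolding minkowski_def by simp_all
    then have "\<mu> v = \<mu> 0" using Hs[of "(1, 0)" "(1, v)"] c2 by simp
    then show ?thesis using Hv[OF v] by simp
  qed
  have "H h k = \<mu> 0 * minkowski c h k" for h k
  proof (rule linear_eq_on_timelike[OF c])
    show "linear (H h)" unfolding H_def by (rule linear_dderiv[OF smooth_fun_dderiv[OF S]])
    show "linear (\<lambda>k. \<mu> 0 * minkowski c h k)"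
      by (rule bounded_linear.linear[OF bounded_linear_const_mult[OF bounded_linear_minkowski_right]])
  qed (rule Htl)
  then show ?thesis using that unfolding H_def by blast
qed

text \<open>This is where \<open>d \<ge> 1\<close> enters: \<open>d\<^sup>3V\<close> is symmetric in a spatial direction and the time
  direction, which forces the conformal factor of the Hessian to vanish.\<close>

lemma lie_point_symmetry_hessian_zero:
  fixes V :: "real \<times> (real^'n) \<Rightarrow> real \<times> (real^'n)"
  assumes L: "lie_point_symmetry c V" and c: "c > 0"
  shows "dderiv (dderiv (conformal_factor V) h) k p = 0"
proof -
  have V: "smooth_fun V" by (rule lie_point_symmetry_smooth[OF L])
  obtain \<mu> where H: "\<And>h k. dderiv (dderiv (conformal_factor V) h) k p = \<mu> * minkowski c h k"
    using lie_point_symmetry_hessian_conformal[OF L c] by blast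
  obtain i :: 'n where True by blast
  define y where "y = (0::real, axis i (1::real))"
  define e where "e = (1::real, 0::real^'n)"
  have m: "minkowski c e y = 0" "minkowski c y e = 0" "minkowski c y y = 1" "minkowski c e e = - c\<^sup>2"
    unfolding minkowski_def e_def y_def by (simp_all add: inner_axis_axis)
  have "minkowski c e (dderiv (dderiv (dderiv V y) e) y p) = minkowski c e (dderiv (dderiv (dderiv V y) y) e p)"
    by (simp only: dderiv_commute[OF smooth_fun_dderiv[OF V]])
  then have "\<mu> * c\<^sup>2 = 0"
    unfolding lie_point_symmetry_third_deriv[OF L c] H m by simp
  then show ?thesis using H c by simp
qed

lemma lie_point_symmetry_grad_constant:
  fixes V :: "real \<times> (real^'n) \<Rightarrow> real \<times> (real^'n)"
  assumes L: "lie_point_symmetry c V" and c: "c > 0"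
  shows "dderiv (conformal_factor V) l p = dderiv (conformal_factor V) l 0"
proof -
  have "(dderiv (conformal_factor V) l has_derivative (\<lambda>h. 0)) (at q)" for q
    using smooth_fun_has_derivative[OF smooth_fun_dderiv[OF smooth_fun_conformal_factor[OF
          lie_point_symmetry_smooth[OF L]]], of l q]
    by (simp add: lie_point_symmetry_hessian_zero[OF L c])
  then show ?thesis by (rule has_derivative_zero_imp_constant)
qed

lemma lie_point_symmetry_second_deriv_eq:
  fixes V :: "real \<times> (real^'n) \<Rightarrow> real \<times> (real^'n)"
  assumes L: "lie_point_symmetry c V" and c: "c > 0"
  defines "g \<equiv> minkowski_dual c (\<lambda>h. dderiv (conformal_factor V) h 0)"
  shows "dderiv (dderiv V k) l p = special_conformal c g k l"
proof (rule minkowski_nondegenerate)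
  show "c \<noteq> 0" using c by simp
  have "linear (\<lambda>h. dderiv (conformal_factor V) h 0)"
    by (rule linear_dderiv[OF smooth_fun_conformal_factor[OF lie_point_symmetry_smooth[OF L]]])
  then have g: "minkowski c x g = dderiv (conformal_factor V) x 0" for x
    unfolding g_def using c by (simp add: minkowski_dual)
  show "minkowski c h (dderiv (dderiv V k) l p) = minkowski c h (special_conformal c g k l)" for h
    unfolding lie_point_symmetry_second_deriv[OF L c] lie_point_symmetry_grad_constant[OF L c, of _ p]
      special_conformal_def minkowski_simps g
    using minkowski_commute[of c k h] minkowski_commute[of c l h] by (simp add: field_simps)
qed

lemma lie_point_symmetry_first_deriv_eq:
  fixes V :: "real \<times> (real^'n) \<Rightarrow> real \<times> (real^'n)"
  assumes L: "lie_point_symmetry c V" and c: "c > 0"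
  defines "g \<equiv> minkowski_dual c (\<lambda>h. dderiv (conformal_factor V) h 0)"
  shows "dderiv V k p = dderiv V k 0 + special_conformal c g k p"
proof -
  have V: "smooth_fun V" by (rule lie_point_symmetry_smooth[OF L])
  have B: "(special_conformal c g k has_derivative special_conformal c g k) (at p)" for p
    by (rule bounded_linear_imp_has_derivative)
      (simp add: linear_conv_bounded_linear[symmetric] linear_special_conformal)
  have "((\<lambda>p. dderiv V k p - special_conformal c g k p) has_derivative
      (\<lambda>l. dderiv (dderiv V k) l p - special_conformal c g k l)) (at p)" for p
    by (intro has_derivative_diff smooth_fun_has_derivative smooth_fun_dderiv V B)
  then have "((\<lambda>p. dderiv V k p - special_conformal c g k p) has_derivative (\<lambda>l. 0)) (at p)" for p
    unfolding g_def lie_point_symmetry_second_deriv_eq[OF L c] by simp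
  then have "dderiv V k p - special_conformal c g k p = dderiv V k 0 - special_conformal c g k 0"
    by (rule has_derivative_zero_imp_constant)
  then show ?thesis by (simp add: linear_0[OF linear_special_conformal] algebra_simps)
qed

lemma lie_point_symmetry_eq_quadratic:
  fixes V :: "real \<times> (real^'n) \<Rightarrow> real \<times> (real^'n)"
  assumes L: "lie_point_symmetry c V" and c: "c > 0"
  defines "g \<equiv> minkowski_dual c (\<lambda>h. dderiv (conformal_factor V) h 0)"
  shows "V p = V 0 + dderiv V p 0 + (1/2) *\<^sub>R special_conformal c g p p"
proof -
  have V: "smooth_fun V" by (rule lie_point_symmetry_smooth[OF L])
  have A: "((\<lambda>p. dderiv V p 0) has_derivative (\<lambda>l. dderiv V l 0)) (at p)" for p
    by (rule bounded_linear_imp_has_derivative[OF bounded_linear_dderiv[OF V]])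
  have B: "((\<lambda>p. special_conformal c g p p) has_derivative
      (\<lambda>l. special_conformal c g p l + special_conformal c g l p)) (at p)" for p
    using bounded_bilinear.FDERIV[OF bounded_bilinear_special_conformal has_derivative_ident has_derivative_ident] .
  have "((\<lambda>p. V p - dderiv V p 0 - (1/2) *\<^sub>R special_conformal c g p p) has_derivative
     (\<lambda>l. dderiv V l p - dderiv V l 0 - (1/2) *\<^sub>R (special_conformal c g p l + special_conformal c g l p))) (at p)"
    for p by (intro has_derivative_diff smooth_fun_has_derivative V A has_derivative_scaleR_right B)
  moreover have "dderiv V l p - dderiv V l 0 - (1/2) *\<^sub>R (special_conformal c g p l + special_conformal c g l p)
      = 0" for l p
    unfolding g_def lie_point_symmetry_first_deriv_eq[OF L c, of l p] special_conformal_commute[of c _ p l]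
    by (simp add: scaleR_add_right[symmetric])
  ultimately have "((\<lambda>p. V p - dderiv V p 0 - (1/2) *\<^sub>R special_conformal c g p p) has_derivative (\<lambda>l. 0))
      (at p)" for p by simp
  then have "V p - dderiv V p 0 - (1/2) *\<^sub>R special_conformal c g p p
      = V 0 - dderiv V 0 0 - (1/2) *\<^sub>R special_conformal c g 0 0"
    by (rule has_derivative_zero_imp_constant)
  then show ?thesis by (simp add: linear_0[OF linear_special_conformal] dderiv_zero[OF V] algebra_simps)
qed

lemma lie_point_symmetry_imp_conformal_quadratic:
  fixes V :: "real \<times> (real^'n) \<Rightarrow> real \<times> (real^'n)"
  assumes L: "lie_point_symmetry c V" and c: "c > 0"
  shows "conformal_quadratic_field c V"
  unfolding conformal_quadratic_field_def
proof (intro exI conjI allI)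
  show "linear (\<lambda>k. dderiv V k 0)" by (rule linear_dderiv[OF lie_point_symmetry_smooth[OF L]])
  show "minkowski c h (dderiv V k 0) + minkowski c (dderiv V h 0) k = conformal_factor V 0 * minkowski c h k"
    for h k using lie_point_symmetry_conformal_killing[OF L c] unfolding killing_form_def .
  show "V p = V 0 + dderiv V p 0
      + (1/2) *\<^sub>R special_conformal c (minkowski_dual c (\<lambda>h. dderiv (conformal_factor V) h 0)) p p" for p
    by (rule lie_point_symmetry_eq_quadratic[OF L c])
qed

section \<open>Conformal quadratic fields are Lie point symmetries\<close>

lemma conformal_quadratic_derivs:
  fixes V :: "real \<times> (real^'n) \<Rightarrow> real \<times> (real^'n)"
  assumes A: "linear A" and V: "\<And>p. V p = Y0 + A p + (1/2) *\<^sub>R special_conformal c g p p"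
  shows "smooth_fun V"
    and "dderiv V l p = A l + special_conformal c g l p"
    and "dderiv (dderiv V l) m p = special_conformal c g l m"
    and "dderiv (dderiv (dderiv V l) m) n p = 0"
proof -
  have A': "(A has_derivative A) F" for F
    using A by (simp add: linear_conv_bounded_linear bounded_linear_imp_has_derivative)
  have B: "(special_conformal c g l has_derivative special_conformal c g l) F" for l F
    by (rule bounded_linear_imp_has_derivative)
      (simp add: linear_conv_bounded_linear[symmetric] linear_special_conformal)
  have D1: "(V has_derivative (\<lambda>l. A l + special_conformal c g l p)) (at p)" for p
  proof -
    have "((\<lambda>p. Y0 + A p + (1/2) *\<^sub>R special_conformal c g p p) has_derivative
        (\<lambda>l. 0 + A l + (1/2) *\<^sub>R (special_conformal c g p l + special_conformal c g l p))) (at p)"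
      by (intro has_derivative_add has_derivative_const A' has_derivative_scaleR_right
          bounded_bilinear.FDERIV[OF bounded_bilinear_special_conformal has_derivative_ident has_derivative_ident])
    moreover have "(\<lambda>l. 0 + A l + (1/2) *\<^sub>R (special_conformal c g p l + special_conformal c g l p))
        = (\<lambda>l. A l + special_conformal c g l p)"
      by (simp add: fun_eq_iff special_conformal_commute[of c g p] scaleR_add_right[symmetric])
    moreover have "V = (\<lambda>p. Y0 + A p + (1/2) *\<^sub>R special_conformal c g p p)" using V by blast
    ultimately show ?thesis by simp
  qed
  have D2: "((\<lambda>p. A l + special_conformal c g l p) has_derivative special_conformal c g l) (at p)" for l p
    using has_derivative_add[OF has_derivative_const B] by simp
  show d1: "dderiv V l p = A l + special_conformal c g l p" for l p by (rule dderiv_eq[OF D1])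
  then have "dderiv V l = (\<lambda>p. A l + special_conformal c g l p)" for l by blast
  then show d2: "dderiv (dderiv V l) m p = special_conformal c g l m" for l m p by (simp add: dderiv_eq[OF D2])
  then have "dderiv (dderiv V l) m = (\<lambda>p. special_conformal c g l m)" for l m by blast
  then show "dderiv (dderiv (dderiv V l) m) n p = 0" by (simp add: dderiv_eq[OF has_derivative_const])
  show "smooth_fun V"
    by (rule smooth_fun_from_derivative[OF D1], rule smooth_fun_from_derivative[OF D2], rule smooth_fun_const)
qed

lemma special_conformal_determining_linear_part:
  fixes v a :: "real^'n"
  assumes "special_conformal c g (1, v) (1, v) = (F2, X2)" "special_conformal c g (1, v) (0, a) = (F2a, X2a)"
  shows "(c\<^sup>2 - v \<bullet> v) *\<^sub>R (X2a - F2a *\<^sub>R v) + (v \<bullet> a) *\<^sub>R (X2 - F2 *\<^sub>R v) + (v \<bullet> X2 - c\<^sup>2 * F2) *\<^sub>R a = 0"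
proof -
  obtain g0 gx where g: "g = (g0, gx)" by fastforce
  have "y * 2 = 2 *\<^sub>R y" for y :: "real^'n" by (simp add: vec_eq_iff)
  then have times2: "x \<bullet> (y * 2) = 2 * (x \<bullet> y)" for x y :: "real^'n" by simp
  have F2: "F2 = fst (special_conformal c g (1, v) (1, v))" and X2: "X2 = snd (special_conformal c g (1, v) (1, v))"
    and F2a: "F2a = fst (special_conformal c g (1, v) (0, a))" and X2a: "X2a = snd (special_conformal c g (1, v) (0, a))"
    using assms by simp_all
  show ?thesis unfolding F2 X2 F2a X2a g special_conformal_def minkowski_def
    by (simp add: vec_eq_iff inner_add_right inner_diff_right inner_commute algebra_simps times2)
      (simp add: field_simps)
qed

lemma conformal_quadratic_determining_expr:
  fixes V :: "real \<times> (real^'n) \<Rightarrow> real \<times> (real^'n)"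
  assumes A: "linear A" and A_conf: "\<And>h k. minkowski c h (A k) + minkowski c (A h) k = \<sigma> * minkowski c h k"
    and V: "\<And>p. V p = Y0 + A p + (1/2) *\<^sub>R special_conformal c g p p" and v: "norm v < c"
  shows "determining_expr c V p v a = 0"
proof -
  note D = conformal_quadratic_derivs[OF A V]
  define W where "W = c\<^sup>2 - v \<bullet> v"
  have W: "W > 0" unfolding W_def by (rule norm_less_imp_sq_minus_inner_pos[OF v])
  obtain F1 X1 where D1: "A (1, v) + special_conformal c g (1, v) p = (F1, X1)" by fastforce
  obtain Fa Xa where Da: "A (0, a) + special_conformal c g (0, a) p = (Fa, Xa)" by fastforce
  obtain F2 X2 where Dvv: "special_conformal c g (1, v) (1, v) = (F2, X2)" by fastforce
  obtain F2a X2a where Dva: "special_conformal c g (1, v) (0, a) = (F2a, X2a)" by fastforce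
  have killing: "minkowski c h (A k + special_conformal c g k p) + minkowski c (A h + special_conformal c g h p) k
      = (\<sigma> + minkowski c p g) * minkowski c h k" for h k
    using A_conf[of h k] special_conformal_killing[of c h g k p] by (simp add: minkowski_simps algebra_simps)
  have "- c\<^sup>2 * Fa + v \<bullet> Xa + X1 \<bullet> a = (\<sigma> + minkowski c p g) * (v \<bullet> a)"
    using killing[of "(1, v)" "(0, a)"] unfolding D1 Da by (simp add: minkowski_def)
  moreover have "2 * (- c\<^sup>2 * F1 + v \<bullet> X1) = (\<sigma> + minkowski c p g) * (- W)"
    using killing[of "(1, v)" "(1, v)"] unfolding D1 by (simp add: minkowski_def W_def inner_commute algebra_simps)
  ultimately have quadratic: "W * (- c\<^sup>2 * Fa + v \<bullet> Xa + X1 \<bullet> a) + (v \<bullet> a) * (2 * (- c\<^sup>2 * F1 + v \<bullet> X1)) = 0"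
    by (simp only:) (simp add: algebra_simps)
  have "determining_expr c V p v a = determining_jet c v a (fst (V p)) (F1, X1) (Fa, Xa) (F2, X2) (F2a, X2a) (0, 0)"
    unfolding determining_expr_def D(2) D(3) D(4) D1 Da Dvv Dva by (simp add: zero_prod_def)
  also have "\<dots> = 0"
    unfolding determining_jet_decomp[OF W_def[symmetric] less_imp_neq[OF W, symmetric]] quadratic
      special_conformal_determining_linear_part[OF Dvv Dva, folded W_def] by simp
  finally show ?thesis .
qed

lemma conformal_quadratic_imp_lie_point_symmetry:
  fixes V :: "real \<times> (real^'n) \<Rightarrow> real \<times> (real^'n)"
  assumes "conformal_quadratic_field c V"
  shows "lie_point_symmetry c V"
proof -
  obtain Y0 A g \<sigma> where A: "linear A"
    and A_conf: "\<And>h k. minkowski c h (A k) + minkowski c (A h) k = \<sigma> * minkowski c h k"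
    and V: "\<And>p. V p = Y0 + A p + (1/2) *\<^sub>R special_conformal c g p p"
    using assms unfolding conformal_quadratic_field_def by blast
  show ?thesis unfolding lie_point_symmetry_def Let_def
  proof (intro conjI allI impI ballI)
    show V': "smooth_fun V" by (rule conformal_quadratic_derivs(1)[OF A V])
    fix I and x :: "real \<Rightarrow> real^'n" and t assume sol: "is_solution c I x" and t: "t \<in> I"
    have "norm (vd x t) < c" using sol t unfolding is_solution_def by blast
    then show "linB c (vd x t) ((vd ^^ 2) x t) ((vd ^^ 3) x t)
       (vd (\<lambda>t. snd (V (t, x t)) - fst (V (t, x t)) *\<^sub>R vd x t) t)
       ((vd ^^ 2) (\<lambda>t. snd (V (t, x t)) - fst (V (t, x t)) *\<^sub>R vd x t) t)
       ((vd ^^ 3) (\<lambda>t. snd (V (t, x t)) - fst (V (t, x t)) *\<^sub>R vd x t) t) = 0"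
      using linB_variation_eq_determining_expr[OF V' sol t] conformal_quadratic_determining_expr[OF A A_conf V]
      by simp
  qed
qed

section \<open>The generators span the conformal quadratic fields\<close>

lemma vec_nth_axis_one: "axis i (1::real) $ k = (if k = i then 1 else 0)"
  by (simp add: axis_def)

lemma inner_axis_one_left: "axis i (1::real) \<bullet> y = y $ i"
  using inner_axis[of y i 1] by (simp add: inner_commute)

definition linear_generator_comb :: "real \<Rightarrow> real \<Rightarrow> ('n \<Rightarrow> real) \<Rightarrow> ('n \<Rightarrow> 'n \<Rightarrow> real)
    \<Rightarrow> real \<times> (real^'n) \<Rightarrow> real \<times> (real^'n)" where
  "linear_generator_comb c d b r p = d *\<^sub>R p + (\<Sum>i\<in>UNIV. b i *\<^sub>R G_boost c i p)
     + (\<Sum>i\<in>UNIV. \<Sum>j\<in>UNIV. r i j *\<^sub>R G_rot i j p)"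

lemma generator_comb_eq:
  fixes p :: "real \<times> (real^'n)"
  shows "a0 *\<^sub>R G_t p + (\<Sum>i\<in>UNIV. a1 i *\<^sub>R G_x i p) + (\<Sum>i\<in>UNIV. a2 i *\<^sub>R G_boost c i p)
     + (\<Sum>i\<in>UNIV. \<Sum>j\<in>UNIV. a3 i j *\<^sub>R G_rot i j p) + a4 *\<^sub>R G_dil p + (\<Sum>i\<in>UNIV. a5 i *\<^sub>R G_sc c i p)
     + a6 *\<^sub>R G_sct c p
   = (a0, \<Sum>i\<in>UNIV. a1 i *\<^sub>R axis i 1) + linear_generator_comb c a4 a2 a3 p
     + (1/2) *\<^sub>R special_conformal c (4 *\<^sub>R (- a6, \<Sum>i\<in>UNIV. a5 i *\<^sub>R axis i 1)) p p"
proof -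
  obtain t x where p: "p = (t, x)" by fastforce
  have if_mult: "(x::real) * (if P then 1 else 0) = (if P then x else 0)"
    "(y::real) * (if P then x else 0) = (if P then y * x else 0)" for x y P by simp_all
  show ?thesis unfolding p linear_generator_comb_def
    by (simp add: prod_eq_iff vec_eq_iff G_t_def G_x_def G_boost_def G_rot_def G_dil_def G_sc_def G_sct_def
        special_conformal_def minkowski_def fst_sum snd_sum sum_component vec_nth_axis_one inner_sum_right
        inner_axis sum_distrib_left sum_distrib_right algebra_simps)
      (simp add: power2_eq_square sum.distrib sum_subtractf if_mult sum.delta sum.delta' algebra_simps)
qed

lemma linear_linear_generator_comb:
  fixes b :: "'n::finite \<Rightarrow> real"
  shows "linear (linear_generator_comb c d b r)"
proof (rule linearI)
  fix p q :: "real \<times> (real^'n)" and s :: real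
  obtain t x where p: "p = (t, x)" by fastforce
  obtain t' y where q: "q = (t', y)" by fastforce
  show "linear_generator_comb c d b r (p + q) = linear_generator_comb c d b r p + linear_generator_comb c d b r q"
    unfolding p q linear_generator_comb_def G_boost_def G_rot_def
    by (simp add: prod_eq_iff vec_eq_iff fst_sum snd_sum sum_component vec_nth_axis_one algebra_simps
        sum.distrib sum_subtractf)
  show "linear_generator_comb c d b r (s *\<^sub>R p) = s *\<^sub>R linear_generator_comb c d b r p"
    unfolding p linear_generator_comb_def G_boost_def G_rot_def
    by (simp add: prod_eq_iff vec_eq_iff fst_sum snd_sum sum_component vec_nth_axis_one algebra_simps
        sum_distrib_left)
qed

lemma linear_generator_comb_conformal:
  fixes b :: "'n::finite \<Rightarrow> real"
  shows "minkowski c h (linear_generator_comb c d b r k) + minkowski c (linear_generator_comb c d b r h) k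
     = (2 * d) * minkowski c h k"
proof -
  obtain t x where h: "h = (t, x)" by fastforce
  obtain s y where k: "k = (s, y)" by fastforce
  show ?thesis unfolding h k linear_generator_comb_def G_boost_def G_rot_def minkowski_def
    by (simp add: fst_sum snd_sum inner_sum_right inner_sum_left inner_axis inner_diff_left inner_diff_right
        inner_add_left inner_add_right algebra_simps sum.distrib sum_subtractf sum_distrib_left
        inner_axis_one_left sum_negf)
qed

lemma generator_span_imp_conformal_quadratic:
  fixes V :: "real \<times> (real^'n) \<Rightarrow> real \<times> (real^'n)"
  assumes "in_generator_span c V"
  shows "conformal_quadratic_field c V"
proof -
  obtain a0 a1 a2 a3 a4 a5 a6 where V: "\<And>p. V p = a0 *\<^sub>R G_t p + (\<Sum>i\<in>UNIV. a1 i *\<^sub>R G_x i p)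
      + (\<Sum>i\<in>UNIV. a2 i *\<^sub>R G_boost c i p) + (\<Sum>i\<in>UNIV. \<Sum>j\<in>UNIV. a3 i j *\<^sub>R G_rot i j p)
      + a4 *\<^sub>R G_dil p + (\<Sum>i\<in>UNIV. a5 i *\<^sub>R G_sc c i p) + a6 *\<^sub>R G_sct c p"
    using assms unfolding in_generator_span_def by blast
  show ?thesis unfolding conformal_quadratic_field_def
  proof (intro exI conjI allI)
    show "linear (linear_generator_comb c a4 a2 a3)" by (rule linear_linear_generator_comb)
    show "minkowski c h (linear_generator_comb c a4 a2 a3 k) + minkowski c (linear_generator_comb c a4 a2 a3 h) k
        = (2 * a4) * minkowski c h k" for h k
      by (rule linear_generator_comb_conformal)
    show "V p = (a0, \<Sum>i\<in>UNIV. a1 i *\<^sub>R axis i 1) + linear_generator_comb c a4 a2 a3 p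
        + (1/2) *\<^sub>R special_conformal c (4 *\<^sub>R (- a6, \<Sum>i\<in>UNIV. a5 i *\<^sub>R axis i 1)) p p" for p
      unfolding V generator_comb_eq ..
  qed
qed

lemma conformal_linear_components:
  fixes A :: "real \<times> (real^'n) \<Rightarrow> real \<times> (real^'n)"
  assumes c: "c \<noteq> 0"
    and A_conf: "\<And>h k. minkowski c h (A k) + minkowski c (A h) k = \<sigma> * minkowski c h k"
  shows "fst (A (1, 0)) = \<sigma> / 2"
    and "snd (A (1, 0)) $ k = c\<^sup>2 * fst (A (0, axis k 1))"
    and "snd (A (0, axis j 1)) $ k + snd (A (0, axis k 1)) $ j = (if k = j then \<sigma> else 0)"
proof -
  show "fst (A (1, 0)) = \<sigma> / 2"
    using A_conf[of "(1, 0)" "(1, 0)"] c unfolding minkowski_def by (simp add: field_simps)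
  show "snd (A (1, 0)) $ k = c\<^sup>2 * fst (A (0, axis k 1))"
    using A_conf[of "(1, 0)" "(0, axis k 1)"] unfolding minkowski_def
    by (simp add: inner_axis_one_left inner_axis)
  show "snd (A (0, axis j 1)) $ k + snd (A (0, axis k 1)) $ j = (if k = j then \<sigma> else 0)"
    using A_conf[of "(0, axis k 1)" "(0, axis j 1)"] unfolding minkowski_def
    by (simp add: inner_axis_one_left inner_axis vec_nth_axis_one)
qed

text \<open>The rotation
  coefficients are halved because the span sums \<open>G_rot i j\<close> over ordered pairs and
  \<open>G_rot j i = - G_rot i j\<close>.\<close>

lemma conformal_linear_eq_generator_comb:
  fixes A :: "real \<times> (real^'n) \<Rightarrow> real \<times> (real^'n)"
  assumes c: "c \<noteq> 0" and A: "linear A"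
    and A_conf: "\<And>h k. minkowski c h (A k) + minkowski c (A h) k = \<sigma> * minkowski c h k"
  defines "b \<equiv> \<lambda>i. fst (A (0, axis i 1))"
    and "r \<equiv> \<lambda>i j. (snd (A (0, axis j 1)) $ i - snd (A (0, axis i 1)) $ j) / 4"
  shows "A p = linear_generator_comb c (\<sigma> / 2) b r p"
proof -
  define e where "e j = (0::real, axis j (1::real))" for j :: 'n
  define M where "M k j = snd (A (e j)) $ k" for k j
  note A_time = conformal_linear_components(1)[OF c A_conf]
  have A_boost: "snd (A (1, 0)) $ k = c\<^sup>2 * b k" for k
    unfolding b_def by (rule conformal_linear_components(2)[OF c A_conf])
  have M_antisym: "M k j + M j k = (if k = j then \<sigma> else 0)" for k j
    unfolding M_def e_def by (rule conformal_linear_components(3)[OF c A_conf])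
  have if_out: "(\<Sum>j\<in>S. if P then f j else (0::real)) = (if P then \<Sum>j\<in>S. f j else 0)" for S P f
    by simp
  obtain t x where p: "p = (t, x)" by fastforce
  have A_expand: "A (t, x) = t *\<^sub>R A (1, 0) + (\<Sum>j\<in>UNIV. (x $ j) *\<^sub>R A (e j))"
    unfolding e_def by (subst pair_basis_expansion) (simp only: linear_add[OF A] linear_sum[OF A] linear_scale[OF A])
  have "fst (A (t, x)) = fst (linear_generator_comb c (\<sigma> / 2) b r (t, x))"
    unfolding A_expand linear_generator_comb_def G_boost_def G_rot_def
    by (simp add: fst_sum A_time b_def e_def algebra_simps)
  moreover have "snd (A (t, x)) $ k = snd (linear_generator_comb c (\<sigma> / 2) b r (t, x)) $ k" for k
  proof -
    have "snd (A (t, x)) $ k = t * (c\<^sup>2 * b k) + (\<Sum>j\<in>UNIV. x $ j * M k j)"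
      unfolding A_expand by (simp add: snd_sum sum_component A_boost M_def)
    moreover have "snd (linear_generator_comb c (\<sigma> / 2) b r (t, x)) $ k = (\<sigma> / 2) * x $ k + t * (c\<^sup>2 * b k)
        + ((\<Sum>j\<in>UNIV. r k j * x $ j) - (\<Sum>i\<in>UNIV. r i k * x $ i))"
      unfolding linear_generator_comb_def G_boost_def G_rot_def
      by (simp add: snd_sum sum_component vec_nth_axis_one sum.delta sum.delta' sum_subtractf
          algebra_simps if_distrib[of "\<lambda>z. _ * z"] if_out cong: if_cong)
    moreover have "(\<Sum>j\<in>UNIV. r k j * x $ j) - (\<Sum>i\<in>UNIV. r i k * x $ i)
        = (\<Sum>j\<in>UNIV. x $ j * M k j - (if k = j then \<sigma> / 2 * x $ j else 0))"
      unfolding sum_subtractf[symmetric]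
    proof (rule sum.cong[OF refl])
      fix j
      have "M j k = (if k = j then \<sigma> else 0) - M k j" using M_antisym[of k j] by simp
      then show "r k j * x $ j - r j k * x $ j = x $ j * M k j - (if k = j then \<sigma> / 2 * x $ j else 0)"
        unfolding r_def M_def e_def by (cases "k = j") (simp_all add: field_simps)
    qed
    moreover have "(\<Sum>j\<in>UNIV. x $ j * M k j - (if k = j then \<sigma> / 2 * x $ j else 0))
        = (\<Sum>j\<in>UNIV. x $ j * M k j) - \<sigma> / 2 * x $ k"
      by (simp add: sum_subtractf sum.delta)
    ultimately show ?thesis by simp
  qed
  ultimately show ?thesis unfolding p by (simp add: prod_eq_iff vec_eq_iff)
qed

lemma conformal_quadratic_imp_generator_span:
  fixes V :: "real \<times> (real^'n) \<Rightarrow> real \<times> (real^'n)"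
  assumes Q: "conformal_quadratic_field c V" and c: "c > 0"
  shows "in_generator_span c V"
proof -
  obtain Y0 A g \<sigma> where A: "linear A"
    and A_conf: "\<And>h k. minkowski c h (A k) + minkowski c (A h) k = \<sigma> * minkowski c h k"
    and V: "\<And>p. V p = Y0 + A p + (1/2) *\<^sub>R special_conformal c g p p"
    using Q unfolding conformal_quadratic_field_def by blast
  have c0: "c \<noteq> 0" using c by simp
  have vec: "(\<Sum>i\<in>UNIV. (y $ i) *\<^sub>R axis i (1::real)) = y" for y :: "real^'n"
    using basis_expansion[of y] by (simp add: scalar_mult_eq_scaleR)
  have "(\<Sum>i\<in>UNIV. (snd g $ i / 4) *\<^sub>R axis i (1::real))
      = (1/4) *\<^sub>R (\<Sum>i\<in>UNIV. (snd g $ i) *\<^sub>R axis i (1::real))"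
    unfolding scaleR_sum_right by (rule sum.cong) simp_all
  then have "(\<Sum>i\<in>UNIV. (snd g $ i / 4) *\<^sub>R axis i (1::real)) = (1/4) *\<^sub>R snd g"
    unfolding vec .
  then have "4 *\<^sub>R (- (- fst g / 4), \<Sum>i\<in>UNIV. (snd g $ i / 4) *\<^sub>R axis i 1) = g"
    by (simp add: prod_eq_iff)
  moreover have "(fst Y0, \<Sum>i\<in>UNIV. (snd Y0 $ i) *\<^sub>R axis i 1) = Y0" by (simp add: vec)
  ultimately have "V p = fst Y0 *\<^sub>R G_t p + (\<Sum>i\<in>UNIV. (snd Y0 $ i) *\<^sub>R G_x i p)
      + (\<Sum>i\<in>UNIV. fst (A (0, axis i 1)) *\<^sub>R G_boost c i p)
      + (\<Sum>i\<in>UNIV. \<Sum>j\<in>UNIV. ((snd (A (0, axis j 1)) $ i - snd (A (0, axis i 1)) $ j) / 4) *\<^sub>R G_rot i j p)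
      + (\<sigma> / 2) *\<^sub>R G_dil p + (\<Sum>i\<in>UNIV. (snd g $ i / 4) *\<^sub>R G_sc c i p) + (- fst g / 4) *\<^sub>R G_sct c p" for p
    unfolding generator_comb_eq V conformal_linear_eq_generator_comb[OF c0 A A_conf, of p] by simp
  then show ?thesis unfolding in_generator_span_def by (intro exI allI)
qed

theorem mainTheorem6:
  fixes c :: real
  assumes "c > 0"
  shows "\<forall>V :: real \<times> (real^'n) \<Rightarrow> real \<times> (real^'n).
           lie_point_symmetry c V \<longleftrightarrow> in_generator_span c V"
proof (intro allI iffI)
  fix V :: "real \<times> (real^'n) \<Rightarrow> real \<times> (real^'n)"
  assume "lie_point_symmetry c V"
  then show "in_generator_span c V"
    using lie_point_symmetry_imp_conformal_quadratic conformal_quadratic_imp_generator_span assms by blast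
next
  fix V :: "real \<times> (real^'n) \<Rightarrow> real \<times> (real^'n)"
  assume "in_generator_span c V"
  then show "lie_point_symmetry c V"
    using generator_span_imp_conformal_quadratic conformal_quadratic_imp_lie_point_symmetry by blast
qed

end
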